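(* Let $A$ be a bounded linear operator on a complex Hilbert space $\mathcal H\neq\{0\}$. Then \[ W_0(A)\cap\partial W(A) = \bigl(\sigma(A)\cap\mathcal C_A\bigr)\cup\mathcal L_A, \] where $\mathcal C_A=\{z\in\mathbb C: |z|=\|A\|\}$ and $\mathcal L_A$ is the union of all chords of the circle $\mathcal C_A$ (closed line segments whose two endpoints lie on $\mathcal C_A$) that are contained in $\partial W(A)$.
   Context: The numerical range of $A$ is $W(A)=\{\langle Ax,x\rangle : x\in\mathcal H,\ \|x\|=1\}$, and $\partial W(A)$ denotes its boundary in $\mathbb C$. The maximal numerical range $W_0(A)$ is the set of all $\lambda\in\mathbb C$ for which there exist unit vectors $x_n\in\mathcal H$ with $\|Ax_n\|\to\|A\|$ and $\langle Ax_n,x_n\rangle\to\lambda$. $\sigma(A)$ denotes the spectrum of $A$. *)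

theory Defs
  imports "HOL-Analysis.Analysis"
begin

text \<open>HOL-Analysis has no complex inner product spaces, so we introduce them as a type class:
  a real normed vector space with a complex scalar multiplication extending the real one and a
  complex inner product, linear in the first argument and conjugate symmetric, inducing the norm.\<close>

class complex_inner = real_normed_vector +
  fixes scaleC :: "complex \<Rightarrow> 'a \<Rightarrow> 'a" (infixr "*\<^sub>C" 75)
    and cinner :: "'a \<Rightarrow> 'a \<Rightarrow> complex"
  assumes scaleC_add_right: "a *\<^sub>C (x + y) = a *\<^sub>C x + a *\<^sub>C y"
    and scaleC_add_left: "(a + b) *\<^sub>C x = a *\<^sub>C x + b *\<^sub>C x"
    and scaleC_scaleC: "a *\<^sub>C (b *\<^sub>C x) = (a * b) *\<^sub>C x"
    and scaleC_one: "1 *\<^sub>C x = x"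
    and scaleC_of_real: "complex_of_real r *\<^sub>C x = r *\<^sub>R x"
    and cinner_add_left: "cinner (x + y) z = cinner x z + cinner y z"
    and cinner_scaleC_left: "cinner (a *\<^sub>C x) y = a * cinner x y"
    and cinner_commute: "cinner x y = cnj (cinner y x)"
    and cinner_self_nonneg: "0 \<le> Re (cinner x x)"
    and norm_eq_sqrt_cinner: "norm x = sqrt (Re (cinner x x))"

class chilbert_space = complex_inner + complete_space


text \<open>Non-vacuity: the complex numbers form a complex Hilbert space.\<close>
instantiation complex :: chilbert_space
begin
definition scaleC_complex :: "complex \<Rightarrow> complex \<Rightarrow> complex" where "scaleC_complex a x = a * x"
definition cinner_complex :: "complex \<Rightarrow> complex \<Rightarrow> complex" where "cinner_complex x y = x * cnj y"
instance
proof
  fix x :: complex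
  show "norm x = sqrt (Re (cinner x x))"
    by (simp add: cinner_complex_def complex_mult_cnj cmod_def power2_eq_square)
qed (auto simp: scaleC_complex_def cinner_complex_def algebra_simps scaleR_conv_of_real)
end

definition cbounded_linear :: "('a::complex_inner \<Rightarrow> 'a) \<Rightarrow> bool" where
  "cbounded_linear A \<longleftrightarrow>
     (\<forall>x y. A (x + y) = A x + A y) \<and>
     (\<forall>c x. A (c *\<^sub>C x) = c *\<^sub>C A x) \<and>
     (\<exists>K. \<forall>x. norm (A x) \<le> K * norm x)"

text \<open>The operator norm is HOL-Analysis' onorm.\<close>

definition num_range :: "('a::complex_inner \<Rightarrow> 'a) \<Rightarrow> complex set" where
  "num_range A = {cinner (A x) x | x. norm x = 1}"

definition max_num_range :: "('a::complex_inner \<Rightarrow> 'a) \<Rightarrow> complex set" where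
  "max_num_range A = {l. \<exists>x :: nat \<Rightarrow> 'a. (\<forall>n. norm (x n) = 1) \<and>
      (\<lambda>n. norm (A (x n))) \<longlonglongrightarrow> onorm A \<and>
      (\<lambda>n. cinner (A (x n)) (x n)) \<longlonglongrightarrow> l}"

definition op_spectrum :: "('a::complex_inner \<Rightarrow> 'a) \<Rightarrow> complex set" where
  "op_spectrum A = {l. \<not> (\<exists>B. cbounded_linear B \<and>
      (\<forall>x. B (A x - l *\<^sub>C x) = x) \<and> (\<forall>y. A (B y) - l *\<^sub>C B y = y))}"

definition circ_A :: "('a::complex_inner \<Rightarrow> 'a) \<Rightarrow> complex set" where
  "circ_A A = {z. norm z = onorm A}"

definition chords_A :: "('a::complex_inner \<Rightarrow> 'a) \<Rightarrow> complex set" where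
  "chords_A A = \<Union> {closed_segment a b | a b. a \<noteq> b \<and> a \<in> circ_A A \<and> b \<in> circ_A A \<and>
      closed_segment a b \<subseteq> frontier (num_range A)}"

end

theory Submission
  imports Defs
begin

text \<open>A point $\lambda$ with $|\lambda| = \|A\|$ is in $W_0(A)$ exactly when it is an approximate
  eigenvalue, since $\|Ax_n - \lambda x_n\|^2 \le 2\|A\|^2 - 2\,\mathrm{Re}(\bar\lambda\langle Ax_n,
  x_n\rangle)$; and a spectral point on that circle is an approximate eigenvalue, because
  $(1 + \delta)\lambda$ lies in the resolvent set. Approximate eigenvectors for distinct points $a, b$
  of the circle are asymptotically orthogonal, so $\sqrt{1-t}\,x_n + \sqrt t\,y_n$ realize every point
  of the chord $[a, b]$ in $W_0(A)$.

  For $p \in W_0(A) \cap \partial W(A)$ inside the disc, convexity of $W(A)$ gives a support line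
  through $p$, say $\mathrm{Re}\,W(A) \le m$ after a rotation. If $x_n$ realizes $p$ in $W_0(A)$, the
  positive semidefinite forms $\|A\|^2\langle u, v\rangle - \langle Au, Av\rangle$ and
  $m\langle u, v\rangle - \frac12(\langle Au, v\rangle + \langle u, Av\rangle)$ vanish asymptotically on
  $(x_n, Ax_n)$. This fixes the limiting Gram data of $x_n, Ax_n$, and suitable combinations of the two
  vectors reach both ends $m \pm i\sqrt{\|A\|^2 - m^2}$ of the chord on the support line. That chord
  lies in $W_0(A)$ and on the support line, hence in $\partial W(A)$, and it contains $p$.\<close>

lemma scaleC_zero_left [simp]: "(0::complex) *\<^sub>C (x::'a::complex_inner) = 0"
  using scaleC_of_real[of 0 x] by simp

lemma scaleC_minus_one: "(-1::complex) *\<^sub>C (x::'a::complex_inner) = - x"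
  using scaleC_of_real[of "-1" x] by simp

lemma scaleC_zero_right [simp]: "c *\<^sub>C (0::'a::complex_inner) = 0"
  using scaleC_add_right[of c 0 0] by simp

lemma scaleC_minus_right: "c *\<^sub>C (- x::'a::complex_inner) = - (c *\<^sub>C x)"
  using scaleC_add_right[of c x "-x"] by (simp add: eq_neg_iff_add_eq_0 add.commute)

lemma scaleC_diff_right: "c *\<^sub>C (x - y::'a::complex_inner) = c *\<^sub>C x - c *\<^sub>C y"
  using scaleC_add_right[of c x "-y"] by (simp add: scaleC_minus_right)

lemma scaleC_minus_left: "(- c) *\<^sub>C (x::'a::complex_inner) = - (c *\<^sub>C x)"
  using scaleC_scaleC[of "-1" c x] scaleC_minus_one[of "c *\<^sub>C x"] by simp

lemma scaleC_diff_left: "(a - b) *\<^sub>C (x::'a::complex_inner) = a *\<^sub>C x - b *\<^sub>C x"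
  using scaleC_add_left[of a "-b" x] by (simp add: scaleC_minus_left)

lemma cinner_zero_left [simp]: "cinner 0 (y::'a::complex_inner) = 0"
  using cinner_add_left[of 0 0 y] by simp

lemma cinner_zero_right [simp]: "cinner (y::'a::complex_inner) 0 = 0"
  using cinner_commute[of y 0] by simp

lemma cinner_add_right: "cinner (x::'a::complex_inner) (y + z) = cinner x y + cinner x z"
  using cinner_commute[of x "y + z"] cinner_commute[of y x] cinner_commute[of z x]
  by (simp add: cinner_add_left)

lemma cinner_scaleC_right: "cinner (x::'a::complex_inner) (a *\<^sub>C y) = cnj a * cinner x y"
  using cinner_commute[of x "a *\<^sub>C y"] cinner_commute[of y x] by (simp add: cinner_scaleC_left)

lemma cinner_diff_left: "cinner (x - y::'a::complex_inner) z = cinner x z - cinner y z"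
  using cinner_add_left[of x "-y" z] cinner_scaleC_left[of "-1" y z] by (simp add: scaleC_minus_one)

lemma cinner_diff_right: "cinner (x::'a::complex_inner) (y - z) = cinner x y - cinner x z"
  by (metis cinner_commute cinner_diff_left complex_cnj_diff)

lemma cnj_cinner: "cnj (cinner x y) = cinner (y::'a::complex_inner) x"
  by (metis cinner_commute complex_cnj_cnj)

lemma Re_cinner_commute: "Re (cinner x y) = Re (cinner (y::'a::complex_inner) x)"
  by (subst cinner_commute) simp

lemma cinner_scaleR_left: "cinner (r *\<^sub>R x::'a::complex_inner) y = complex_of_real r * cinner x y"
  by (metis cinner_scaleC_left scaleC_of_real)

lemma cinner_scaleR_right: "cinner (x::'a::complex_inner) (r *\<^sub>R y) = complex_of_real r * cinner x y"
  by (metis cinner_scaleC_right scaleC_of_real complex_cnj_complex_of_real)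

lemma cinner_self: "cinner (x::'a::complex_inner) x = complex_of_real ((norm x)\<^sup>2)"
proof -
  have "Im (cinner x x) = 0"
    using cinner_commute[of x x] by (metis Reals_cnj_iff complex_is_Real_iff)
  moreover have "Re (cinner x x) = (norm x)\<^sup>2"
    using norm_eq_sqrt_cinner[of x] cinner_self_nonneg[of x] by simp
  ultimately show ?thesis by (simp add: complex_eq_iff)
qed

lemma Re_cinner_self: "Re (cinner (x::'a::complex_inner) x) = (norm x)\<^sup>2"
  by (simp add: cinner_self)

definition sesquilinear :: "('a::complex_inner \<Rightarrow> 'a \<Rightarrow> complex) \<Rightarrow> bool" where
  "sesquilinear B \<longleftrightarrow>
     (\<forall>x y z. B (x + y) z = B x z + B y z) \<and> (\<forall>c x y. B (c *\<^sub>C x) y = c * B x y) \<and>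
     (\<forall>x y z. B x (y + z) = B x y + B x z) \<and> (\<forall>c x y. B x (c *\<^sub>C y) = cnj c * B x y)"

definition psd_form :: "('a::complex_inner \<Rightarrow> 'a \<Rightarrow> complex) \<Rightarrow> bool" where
  "psd_form B \<longleftrightarrow> sesquilinear B \<and> (\<forall>x y. B x y = cnj (B y x)) \<and> (\<forall>x. 0 \<le> Re (B x x))"

lemma sesquilinear_cinner: "sesquilinear cinner"
  by (simp add: sesquilinear_def cinner_add_left cinner_add_right cinner_scaleC_left
      cinner_scaleC_right)

lemma psd_form_cinner: "psd_form cinner"
  by (metis psd_form_def sesquilinear_cinner cinner_commute cinner_self_nonneg)

lemma sesquilinear_compose:
  assumes "sesquilinear B" "cbounded_linear F" "cbounded_linear G"
  shows "sesquilinear (\<lambda>u v. B (F u) (G v))"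
  using assms unfolding sesquilinear_def cbounded_linear_def by simp

lemma sesquilinear_lincomb:
  assumes "sesquilinear B" "sesquilinear C"
  shows "sesquilinear (\<lambda>u v. a * B u v + b * C u v)"
  using assms unfolding sesquilinear_def by (simp add: algebra_simps)

lemma sesquilinear_expand:
  assumes "sesquilinear B"
  shows "B (c *\<^sub>C x + d *\<^sub>C y) (c *\<^sub>C u + d *\<^sub>C v)
    = (c * cnj c) * B x u + (c * cnj d) * B x v + (d * cnj c) * B y u + (d * cnj d) * B y v"
proof -
  have B: "\<And>x y z. B (x + y) z = B x z + B y z" "\<And>c x y. B (c *\<^sub>C x) y = c * B x y"
    "\<And>x y z. B x (y + z) = B x y + B x z" "\<And>c x y. B x (c *\<^sub>C y) = cnj c * B x y"
    using assms unfolding sesquilinear_def by blast+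
  show ?thesis by (simp only: B) (simp add: ring_distribs mult_ac add_ac)
qed

lemma sesquilinear_expand_real:
  assumes "sesquilinear B"
  shows "B (a *\<^sub>R x + b *\<^sub>R y) (a *\<^sub>R x + b *\<^sub>R y)
    = complex_of_real (a\<^sup>2) * B x x + complex_of_real (a * b) * (B x y + B y x)
      + complex_of_real (b\<^sup>2) * B y y"
  using sesquilinear_expand[OF assms, of "complex_of_real a" x "complex_of_real b" y x y]
  by (simp add: scaleC_of_real power2_eq_square algebra_simps)

lemma sesquilinear_scaleR:
  assumes "sesquilinear B"
  shows "B (r *\<^sub>R x) (s *\<^sub>R y) = complex_of_real (r * s) * B x y"
  using assms unfolding sesquilinear_def by (metis scaleC_of_real complex_cnj_complex_of_real
      mult.assoc of_real_mult)

lemma psd_form_Re_self: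
  assumes "psd_form B"
  shows "B x x = complex_of_real (Re (B x x))"
  using assms unfolding psd_form_def by (metis Reals_cnj_iff complex_is_Real_iff of_real_Re)

lemma nonneg_quadratic_imp_le:
  fixes P S q :: real
  assumes quad: "\<And>t. 0 \<le> P - 2 * t * q + t\<^sup>2 * q * S" and "0 \<le> S"
  shows "q \<le> P * S"
proof (cases "S = 0")
  case True
  show ?thesis
  proof (rule ccontr)
    assume "\<not> ?thesis"
    then have "q > 0" using True by simp
    have "0 \<le> P - 2 * ((P + 1) / (2 * q)) * q"
      using quad[of "(P + 1) / (2 * q)"] True by simp
    also have "\<dots> = -1" using \<open>q > 0\<close> by (simp add: field_simps)
    finally show False by simp
  qed
next
  case False
  then have "S > 0" using \<open>0 \<le> S\<close> by simp
  have "0 \<le> P - 2 * (1 / S) * q + (1 / S)\<^sup>2 * q * S" by (rule quad)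
  also have "\<dots> = (P * S - q) / S" using \<open>S > 0\<close> by (simp add: field_simps power2_eq_square)
  finally show ?thesis using \<open>S > 0\<close> by (simp add: zero_le_divide_iff)
qed

lemma psd_form_Cauchy_Schwarz:
  assumes "psd_form B"
  shows "(cmod (B x y))\<^sup>2 \<le> Re (B x x) * Re (B y y)"
proof -
  have B: "sesquilinear B" "\<And>x y. B x y = cnj (B y x)" "\<And>x. 0 \<le> Re (B x x)"
    using assms unfolding psd_form_def by blast+
  let ?b = "B x y"
  have "0 \<le> Re (B x x) - 2 * t * (cmod ?b)\<^sup>2 + t\<^sup>2 * (cmod ?b)\<^sup>2 * Re (B y y)" for t :: real
  proof -
    let ?c = "- complex_of_real t * ?b"
    have e: "B (1 *\<^sub>C x + ?c *\<^sub>C y) (1 *\<^sub>C x + ?c *\<^sub>C y)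
        = B x x + cnj ?c * ?b + ?c * cnj ?b + ?c * cnj ?c * B y y"
      using sesquilinear_expand[OF B(1), of 1 x ?c y x y] B(2)[of y x] by (simp add: algebra_simps)
    have "Re (B (1 *\<^sub>C x + ?c *\<^sub>C y) (1 *\<^sub>C x + ?c *\<^sub>C y))
        = Re (B x x) - 2 * t * (cmod ?b)\<^sup>2 + t\<^sup>2 * (cmod ?b)\<^sup>2 * Re (B y y)"
      unfolding e by (subst psd_form_Re_self[OF assms, of y], simp only: cmod_power2)
        (simp add: power2_eq_square algebra_simps)
    then show ?thesis using B(3) by metis
  qed
  then show ?thesis
    using B(3)[of y] by (rule nonneg_quadratic_imp_le)
qed

lemma psd_form_tendsto_zero:
  assumes B: "psd_form B" and x: "(\<lambda>n. Re (B (x n) (x n))) \<longlonglongrightarrow> 0"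
    and w: "\<And>n. Re (B (w n) (w n)) \<le> K"
  shows "(\<lambda>n. B (x n) (w n)) \<longlonglongrightarrow> 0"
proof (rule Lim_null_comparison)
  have "(cmod (B (x n) (w n)))\<^sup>2 \<le> Re (B (x n) (x n)) * K" for n
    using psd_form_Cauchy_Schwarz[OF B, of "x n" "w n"] w[of n] B
    by (metis psd_form_def mult_left_mono order_trans)
  then show "\<forall>\<^sub>F n in sequentially. norm (B (x n) (w n)) \<le> sqrt (Re (B (x n) (x n)) * K)"
    by (intro always_eventually allI) (simp add: real_le_rsqrt)
  have "(\<lambda>n. sqrt (Re (B (x n) (x n)) * K)) \<longlonglongrightarrow> sqrt (0 * K)"
    by (intro tendsto_intros x)
  then show "(\<lambda>n. sqrt (Re (B (x n) (x n)) * K)) \<longlonglongrightarrow> 0" by simp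
qed

lemma cmod_cinner_le: "cmod (cinner (x::'a::complex_inner) y) \<le> norm x * norm y"
proof -
  have "(cmod (cinner x y))\<^sup>2 \<le> (norm x * norm y)\<^sup>2"
    using psd_form_Cauchy_Schwarz[OF psd_form_cinner, of x y]
    by (simp add: Re_cinner_self power_mult_distrib)
  then show ?thesis by (simp add: power2_le_iff_abs_le)
qed

lemma norm_scaleC: "norm (c *\<^sub>C (x::'a::complex_inner)) = cmod c * norm x"
proof -
  have "cinner (c *\<^sub>C x) (c *\<^sub>C x) = (c * cnj c) * cinner x x"
    by (simp add: cinner_scaleC_left cinner_scaleC_right)
  also have "\<dots> = complex_of_real ((cmod c)\<^sup>2 * (norm x)\<^sup>2)"
    by (simp add: complex_norm_square[symmetric] cinner_self)
  finally have "cinner (c *\<^sub>C x) (c *\<^sub>C x) = complex_of_real ((cmod c)\<^sup>2 * (norm x)\<^sup>2)" .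
  then have "(norm (c *\<^sub>C x))\<^sup>2 = (cmod c * norm x)\<^sup>2"
    using Re_cinner_self[of "c *\<^sub>C x"] by (simp add: power_mult_distrib)
  then show ?thesis by (simp add: power2_eq_iff_nonneg)
qed

lemma norm_add_sq:
  "(norm (x + y :: 'a::complex_inner))\<^sup>2 = (norm x)\<^sup>2 + (norm y)\<^sup>2 + 2 * Re (cinner x y)"
proof -
  have "cinner (x + y) (x + y) = cinner x x + cinner y y + (cinner x y + cnj (cinner x y))"
    using cinner_commute[of y x] by (simp add: cinner_add_left cinner_add_right)
  then show ?thesis by (simp only: Re_cinner_self[symmetric]) (simp add: Re_cinner_self)
qed

lemma norm_diff_sq:
  "(norm (x - y :: 'a::complex_inner))\<^sup>2 = (norm x)\<^sup>2 + (norm y)\<^sup>2 - 2 * Re (cinner x y)"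
proof -
  have "x - y = 1 *\<^sub>C x + (-1) *\<^sub>C y"
    by (simp add: scaleC_one scaleC_minus_one)
  then have "cinner (x - y) (x - y) = cinner x x + cinner y y - (cinner x y + cnj (cinner x y))"
    using sesquilinear_expand[OF sesquilinear_cinner, of 1 x "-1" y x y] cinner_commute[of y x]
    by simp
  then show ?thesis by (simp only: Re_cinner_self[symmetric]) (simp add: Re_cinner_self)
qed

lemma norm_add_scaleR_sq:
  "(norm (a *\<^sub>R x + b *\<^sub>R y :: 'a::complex_inner))\<^sup>2
    = a\<^sup>2 * (norm x)\<^sup>2 + b\<^sup>2 * (norm y)\<^sup>2 + 2 * a * b * Re (cinner x y)"
  by (simp add: norm_add_sq cinner_scaleR_left cinner_scaleR_right power_mult_distrib)

lemma cinner_tendsto_zero_left: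
  assumes "e \<longlonglongrightarrow> 0" "\<And>n. norm (w n) \<le> K"
  shows "(\<lambda>n. cinner (e n) (w n :: 'a::complex_inner)) \<longlonglongrightarrow> 0"
proof (rule Lim_null_comparison)
  show "\<forall>\<^sub>F n in sequentially. norm (cinner (e n) (w n)) \<le> norm (e n) * K"
    by (intro always_eventually allI order_trans[OF cmod_cinner_le] mult_left_mono assms(2)) simp
  show "(\<lambda>n. norm (e n) * K) \<longlonglongrightarrow> 0"
    using tendsto_mult_left_zero[OF tendsto_norm_zero[OF assms(1)]] .
qed

lemma cinner_tendsto_zero_right:
  assumes "e \<longlonglongrightarrow> 0" "\<And>n. norm (w n) \<le> K"
  shows "(\<lambda>n. cinner (w n) (e n :: 'a::complex_inner)) \<longlonglongrightarrow> 0"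
proof -
  have "(\<lambda>n. cnj (cinner (e n) (w n))) \<longlonglongrightarrow> cnj 0"
    by (rule tendsto_cnj[OF cinner_tendsto_zero_left[OF assms]])
  then show ?thesis by (simp add: cnj_cinner)
qed

lemma cbounded_linear_id: "cbounded_linear (\<lambda>x::'a::complex_inner. x)"
  unfolding cbounded_linear_def by (auto intro: exI[of _ 1])

locale cbounded_operator =
  fixes A :: "'a::complex_inner \<Rightarrow> 'a"
  assumes cbounded_linear: "cbounded_linear A"
begin

abbreviation R where "R \<equiv> onorm A"

lemma add: "A (x + y) = A x + A y"
  and scaleC: "A (c *\<^sub>C x) = c *\<^sub>C A x"
  using cbounded_linear unfolding cbounded_linear_def by blast+

lemma scaleR: "A (r *\<^sub>R x) = r *\<^sub>R A x"
  using scaleC[of "complex_of_real r" x] by (simp add: scaleC_of_real)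

lemma diff: "A (x - y) = A x - A y"
  using add[of "x - y" y] by simp

lemma zero [simp]: "A 0 = 0"
  using scaleR[of 0 0] by simp

lemma bounded_linear: "bounded_linear A"
proof
  obtain K where "\<And>x. norm (A x) \<le> K * norm x"
    using cbounded_linear unfolding cbounded_linear_def by blast
  then show "\<exists>K. \<forall>x. norm (A x) \<le> norm x * K" by (metis mult.commute)
qed (simp_all add: add scaleR)

lemmas tendsto = bounded_linear.tendsto[OF bounded_linear]

lemma onorm_nonneg: "0 \<le> R"
  by (rule onorm_pos_le[OF bounded_linear])

lemma norm_le: "norm (A x) \<le> R * norm x"
  by (rule onorm[OF bounded_linear])

lemma norm_le_unit: "norm x = 1 \<Longrightarrow> norm (A x) \<le> R"
  using norm_le[of x] by simp

lemma cmod_cinner_self_le: "cmod (cinner (A x) x) \<le> R * (norm x)\<^sup>2"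
proof -
  have "cmod (cinner (A x) x) \<le> norm (A x) * norm x" by (rule cmod_cinner_le)
  also have "\<dots> \<le> (R * norm x) * norm x" by (rule mult_right_mono[OF norm_le norm_ge_zero])
  finally show ?thesis by (simp add: power2_eq_square mult.assoc)
qed

lemma num_range_subset_cball: "num_range A \<subseteq> cball 0 R"
proof
  fix z assume "z \<in> num_range A"
  then obtain x where "norm x = 1" "z = cinner (A x) x" unfolding num_range_def by blast
  then show "z \<in> cball 0 R" using cmod_cinner_self_le[of x] by simp
qed

lemma norm_le_if_in_closure_num_range: "z \<in> closure (num_range A) \<Longrightarrow> cmod z \<le> R"
  using closure_mono[OF num_range_subset_cball] by auto

lemma frontier_num_range_if_on_circle:
  assumes "p \<in> closure (num_range A)" "cmod p = R"
  shows "p \<in> frontier (num_range A)"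
proof -
  have "interior (num_range A) \<subseteq> ball 0 R"
    using interior_mono[OF num_range_subset_cball] by simp
  then show ?thesis using assms unfolding frontier_def by auto
qed

lemma closure_num_range_iff_seq:
  "p \<in> closure (num_range A) \<longleftrightarrow>
    (\<exists>x. (\<forall>n. norm (x n) = 1) \<and> (\<lambda>n. cinner (A (x n)) (x n)) \<longlonglongrightarrow> p)"
proof
  assume "p \<in> closure (num_range A)"
  then obtain w where w: "\<And>n. w n \<in> num_range A" "w \<longlonglongrightarrow> p"
    unfolding closure_sequential by blast
  then have "\<forall>n. \<exists>x. norm x = 1 \<and> w n = cinner (A x) x"
    unfolding num_range_def by blast
  then obtain x where x: "\<And>n. norm (x n) = 1 \<and> w n = cinner (A (x n)) (x n)" by metis
  then have "w = (\<lambda>n. cinner (A (x n)) (x n))" by auto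
  then show "\<exists>x. (\<forall>n. norm (x n) = 1) \<and> (\<lambda>n. cinner (A (x n)) (x n)) \<longlonglongrightarrow> p"
    using x w(2) by auto
next
  assume "\<exists>x. (\<forall>n. norm (x n) = 1) \<and> (\<lambda>n. cinner (A (x n)) (x n)) \<longlonglongrightarrow> p"
  then obtain x where "\<And>n. norm (x n) = 1" "(\<lambda>n. cinner (A (x n)) (x n)) \<longlonglongrightarrow> p"
    by blast
  then show "p \<in> closure (num_range A)"
    unfolding closure_sequential num_range_def
    by (intro exI[of _ "\<lambda>n. cinner (A (x n)) (x n)"]) blast
qed

lemma max_num_range_subset_closure: "max_num_range A \<subseteq> closure (num_range A)"
  unfolding max_num_range_def using closure_num_range_iff_seq by blast

lemma cinner_normalize:
  assumes "z \<noteq> 0"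
  shows "norm ((1 / norm z) *\<^sub>R z) = 1"
    and "cinner (A ((1 / norm z) *\<^sub>R z)) ((1 / norm z) *\<^sub>R z) = cinner (A z) z / (norm z)\<^sup>2"
    and "norm (A ((1 / norm z) *\<^sub>R z)) = norm (A z) / norm z"
  using assms
  by (auto simp: scaleR cinner_scaleR_left cinner_scaleR_right power2_eq_square field_simps)

lemma max_num_range_if_normalized_seq:
  assumes "eventually (\<lambda>n. z n \<noteq> 0) sequentially"
    and "(\<lambda>n. cinner (A (z n)) (z n) / (norm (z n))\<^sup>2) \<longlonglongrightarrow> p"
    and "(\<lambda>n. norm (A (z n)) / norm (z n)) \<longlonglongrightarrow> R"
  shows "p \<in> max_num_range A"
proof -
  obtain N where N: "\<And>n. z (n + N) \<noteq> 0"
    using assms(1) unfolding eventually_sequentially by (metis le_add2)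
  define u where "u n = (1 / norm (z (n + N))) *\<^sub>R z (n + N)" for n
  have "\<And>n. norm (u n) = 1"
    and "(\<lambda>n. cinner (A (u n)) (u n)) \<longlonglongrightarrow> p"
    and "(\<lambda>n. norm (A (u n))) \<longlonglongrightarrow> R"
    using cinner_normalize[OF N] LIMSEQ_ignore_initial_segment[OF assms(2), of N]
      LIMSEQ_ignore_initial_segment[OF assms(3), of N]
    unfolding u_def by simp_all
  then show ?thesis unfolding max_num_range_def by blast
qed

lemma closure_num_range_if_normalized_seq:
  assumes "eventually (\<lambda>n. z n \<noteq> 0) sequentially"
    and "(\<lambda>n. cinner (A (z n)) (z n) / (norm (z n))\<^sup>2) \<longlonglongrightarrow> p"
  shows "p \<in> closure (num_range A)"
proof -
  obtain N where N: "\<And>n. z (n + N) \<noteq> 0"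
    using assms(1) unfolding eventually_sequentially by (metis le_add2)
  define u where "u n = (1 / norm (z (n + N))) *\<^sub>R z (n + N)" for n
  have "\<And>n. norm (u n) = 1" and "(\<lambda>n. cinner (A (u n)) (u n)) \<longlonglongrightarrow> p"
    using cinner_normalize[OF N] LIMSEQ_ignore_initial_segment[OF assms(2), of N]
    unfolding u_def by simp_all
  then show ?thesis unfolding closure_num_range_iff_seq by blast
qed

lemma eventually_nonzero_if_norm_sq_tendsto:
  assumes "(\<lambda>n. (norm (z n))\<^sup>2) \<longlonglongrightarrow> s" "s > 0"
  shows "eventually (\<lambda>n. z n \<noteq> 0) sequentially"
  using order_tendstoD(1)[OF assms] by eventually_elim auto

lemma closure_num_range_if_seq_limits:
  assumes "(\<lambda>n. (norm (z n))\<^sup>2) \<longlonglongrightarrow> s" "s > 0"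
    and "(\<lambda>n. cinner (A (z n)) (z n)) \<longlonglongrightarrow> complex_of_real s * p"
  shows "p \<in> closure (num_range A)"
proof (rule closure_num_range_if_normalized_seq)
  show "eventually (\<lambda>n. z n \<noteq> 0) sequentially"
    by (rule eventually_nonzero_if_norm_sq_tendsto[OF assms(1,2)])
  have "(\<lambda>n. cinner (A (z n)) (z n) / (norm (z n))\<^sup>2) \<longlonglongrightarrow> (s * p) / s"
    using assms by (intro tendsto_intros) auto
  then show "(\<lambda>n. cinner (A (z n)) (z n) / (norm (z n))\<^sup>2) \<longlonglongrightarrow> p"
    using assms(2) by simp
qed

lemma max_num_range_if_seq_limits:
  assumes "(\<lambda>n. (norm (z n))\<^sup>2) \<longlonglongrightarrow> s" "s > 0"
    and "(\<lambda>n. (norm (A (z n)))\<^sup>2) \<longlonglongrightarrow> s * R\<^sup>2"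
    and "(\<lambda>n. cinner (A (z n)) (z n)) \<longlonglongrightarrow> complex_of_real s * p"
  shows "p \<in> max_num_range A"
proof (rule max_num_range_if_normalized_seq)
  show "eventually (\<lambda>n. z n \<noteq> 0) sequentially"
    by (rule eventually_nonzero_if_norm_sq_tendsto[OF assms(1,2)])
  have "(\<lambda>n. cinner (A (z n)) (z n) / (norm (z n))\<^sup>2) \<longlonglongrightarrow> (s * p) / s"
    using assms by (intro tendsto_intros) auto
  then show "(\<lambda>n. cinner (A (z n)) (z n) / (norm (z n))\<^sup>2) \<longlonglongrightarrow> p"
    using assms(2) by simp
  have "(\<lambda>n. sqrt ((norm (A (z n)))\<^sup>2) / sqrt ((norm (z n))\<^sup>2)) \<longlonglongrightarrow> sqrt (s * R\<^sup>2) / sqrt s"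
    using assms by (intro tendsto_intros) auto
  then show "(\<lambda>n. norm (A (z n)) / norm (z n)) \<longlonglongrightarrow> R"
    using assms(2) onorm_nonneg by (simp add: real_sqrt_mult)
qed

lemma onorm_scaleC_unimodular:
  assumes "cmod d = 1"
  shows "onorm (\<lambda>x. d *\<^sub>C A x) = R"
  unfolding onorm_def using assms by (simp add: norm_scaleC)

end

lemma cbounded_linear_shift:
  assumes "cbounded_linear (A::'a::complex_inner \<Rightarrow> 'a)"
  shows "cbounded_linear (\<lambda>x. A x - l *\<^sub>C x)"
proof -
  interpret cbounded_operator A by unfold_locales (rule assms)
  have "norm (A x - l *\<^sub>C x) \<le> (R + cmod l) * norm x" for x
    using norm_triangle_ineq4[of "A x" "l *\<^sub>C x"] norm_le[of x]
    by (simp add: norm_scaleC algebra_simps)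
  moreover have "A (x + y) - l *\<^sub>C (x + y) = (A x - l *\<^sub>C x) + (A y - l *\<^sub>C y)" for x y
    by (simp add: add scaleC_add_right)
  moreover have "A (c *\<^sub>C x) - l *\<^sub>C (c *\<^sub>C x) = c *\<^sub>C (A x - l *\<^sub>C x)" for c x
    by (simp add: scaleC scaleC_diff_right scaleC_scaleC mult.commute)
  ultimately show ?thesis unfolding cbounded_linear_def by blast
qed

lemma cbounded_linear_scaleC_left:
  assumes "cbounded_linear A"
  shows "cbounded_linear (\<lambda>x. d *\<^sub>C A x)"
proof -
  interpret cbounded_operator A by unfold_locales (rule assms)
  show ?thesis
    unfolding cbounded_linear_def
  proof (intro conjI allI exI)
    show "d *\<^sub>C A (x + y) = d *\<^sub>C A x + d *\<^sub>C A y" for x y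
      by (simp add: add scaleC_add_right)
    show "d *\<^sub>C A (c *\<^sub>C x) = c *\<^sub>C (d *\<^sub>C A x)" for c x
      by (simp add: scaleC scaleC_scaleC mult.commute)
    show "norm (d *\<^sub>C A x) \<le> (cmod d * R) * norm x" for x
      using mult_left_mono[OF norm_le[of x], of "cmod d"] by (simp add: norm_scaleC mult.assoc)
  qed
qed

section \<open>Approximate eigenvalues\<close>

definition approx_eigenvalue :: "('a::complex_inner \<Rightarrow> 'a) \<Rightarrow> complex \<Rightarrow> bool" where
  "approx_eigenvalue A l \<longleftrightarrow> (\<exists>x. (\<forall>n. norm (x n) = 1) \<and> (\<lambda>n. A (x n) - l *\<^sub>C x n) \<longlonglongrightarrow> 0)"

context cbounded_operator
begin

lemma approx_eigenvector_if_on_circle: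
  assumes unit: "\<And>n. norm (x n) = 1"
    and lim: "(\<lambda>n. cinner (A (x n)) (x n)) \<longlonglongrightarrow> a" and a: "cmod a = R"
  shows "(\<lambda>n. A (x n) - a *\<^sub>C x n) \<longlonglongrightarrow> 0"
proof -
  have le: "(norm (A (x n) - a *\<^sub>C x n))\<^sup>2 \<le> 2 * R\<^sup>2 - 2 * Re (cnj a * cinner (A (x n)) (x n))" for n
  proof -
    have "(norm (A (x n)))\<^sup>2 \<le> R\<^sup>2"
      using norm_le_unit[OF unit] by (simp add: power_mono)
    then show ?thesis
      using norm_diff_sq[of "A (x n)" "a *\<^sub>C x n"] unit[of n] a
      by (simp add: norm_scaleC cinner_scaleC_right)
  qed
  have "(\<lambda>n. 2 * R\<^sup>2 - 2 * Re (cnj a * cinner (A (x n)) (x n))) \<longlonglongrightarrow> 2 * R\<^sup>2 - 2 * Re (cnj a * a)"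
    by (intro tendsto_intros lim)
  moreover have "2 * R\<^sup>2 - 2 * Re (cnj a * a) = 0"
  proof -
    have "cnj a * a = complex_of_real (R\<^sup>2)"
      using a complex_norm_square[of a] by (simp add: mult.commute)
    then show ?thesis by simp
  qed
  ultimately have bound: "(\<lambda>n. 2 * R\<^sup>2 - 2 * Re (cnj a * cinner (A (x n)) (x n))) \<longlonglongrightarrow> 0"
    by simp
  have "(\<lambda>n. (norm (A (x n) - a *\<^sub>C x n))\<^sup>2) \<longlonglongrightarrow> 0"
    by (rule tendsto_sandwich[OF _ _ tendsto_const bound]) (use le in auto)
  then have "(\<lambda>n. sqrt ((norm (A (x n) - a *\<^sub>C x n))\<^sup>2)) \<longlonglongrightarrow> sqrt 0"
    by (rule tendsto_real_sqrt)
  then show ?thesis by (simp add: tendsto_norm_zero_iff)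
qed

lemma cinner_tendsto_if_approx_eigenvector:
  assumes unit: "\<And>n. norm (x n) = 1" and lim: "(\<lambda>n. A (x n) - a *\<^sub>C x n) \<longlonglongrightarrow> 0"
  shows "(\<lambda>n. cinner (A (x n)) (x n)) \<longlonglongrightarrow> a"
proof -
  have "(\<lambda>n. cinner (A (x n) - a *\<^sub>C x n) (x n)) \<longlonglongrightarrow> 0"
    using cinner_tendsto_zero_left[OF lim, of x 1] unit by simp
  moreover have "cinner (A (x n) - a *\<^sub>C x n) (x n) = cinner (A (x n)) (x n) - a" for n
    using unit[of n] by (simp add: cinner_diff_left cinner_scaleC_left cinner_self)
  ultimately show ?thesis by (simp add: LIM_zero_iff)
qed

lemma norm_tendsto_if_approx_eigenvector:
  assumes unit: "\<And>n. norm (x n) = 1" and lim: "(\<lambda>n. A (x n) - a *\<^sub>C x n) \<longlonglongrightarrow> 0"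
    and a: "cmod a = R"
  shows "(\<lambda>n. norm (A (x n))) \<longlonglongrightarrow> R"
proof -
  have "(\<lambda>n. norm (A (x n)) - R) \<longlonglongrightarrow> 0"
  proof (rule Lim_null_comparison)
    show "\<forall>\<^sub>F n in sequentially. norm (norm (A (x n)) - R) \<le> norm (A (x n) - a *\<^sub>C x n)"
      using norm_triangle_ineq3[of "A (x _)" "a *\<^sub>C x _"] unit a
      by (intro always_eventually allI) (simp add: norm_scaleC)
  qed (rule tendsto_norm_zero[OF lim])
  then show ?thesis by (simp add: LIM_zero_iff)
qed

lemma max_num_range_if_approx_eigenvalue:
  assumes "approx_eigenvalue A l" "cmod l = R"
  shows "l \<in> max_num_range A"
  using assms cinner_tendsto_if_approx_eigenvector norm_tendsto_if_approx_eigenvector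
  unfolding approx_eigenvalue_def max_num_range_def by blast

lemma approx_eigenvalue_if_on_circle:
  assumes "p \<in> closure (num_range A)" "cmod p = R"
  shows "approx_eigenvalue A p"
  using assms approx_eigenvector_if_on_circle
  unfolding closure_num_range_iff_seq approx_eigenvalue_def by blast

lemma spectrum_if_approx_eigenvalue:
  assumes "approx_eigenvalue A l"
  shows "l \<in> op_spectrum A"
proof (rule ccontr)
  assume "l \<notin> op_spectrum A"
  then obtain B where B: "cbounded_linear B" "\<And>x. B (A x - l *\<^sub>C x) = x"
    unfolding op_spectrum_def by blast
  interpret B: cbounded_operator B by unfold_locales (rule B(1))
  obtain x where x: "\<And>n. norm (x n) = 1" "(\<lambda>n. A (x n) - l *\<^sub>C x n) \<longlonglongrightarrow> 0"
    using assms unfolding approx_eigenvalue_def by blast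
  have "(\<lambda>n. B (A (x n) - l *\<^sub>C x n)) \<longlonglongrightarrow> B 0"
    by (rule B.tendsto[OF x(2)])
  then have "(\<lambda>n. norm (x n)) \<longlonglongrightarrow> 0"
    using B(2) by (simp add: tendsto_norm_zero_iff)
  then show False using x(1) by (simp add: LIMSEQ_const_iff)
qed

lemma approx_eigenvalue_if_not_bounded_below:
  assumes "\<not> (\<exists>c>0. \<forall>x. c * norm x \<le> norm (A x - l *\<^sub>C x))"
  shows "approx_eigenvalue A l"
proof -
  have "\<exists>x. norm (A x - l *\<^sub>C x) < 1 / (real n + 1) * norm x" for n :: nat
  proof -
    have "1 / (real n + 1) > 0" by simp
    then show ?thesis using assms by (meson linorder_not_le)
  qed
  then obtain x where x: "\<And>n. norm (A (x n) - l *\<^sub>C x n) < 1 / (real n + 1) * norm (x n)"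
    by metis
  have x0: "x n \<noteq> 0" for n
    using x[of n] by auto
  define u where "u n = (1 / norm (x n)) *\<^sub>R x n" for n
  have "norm (u n) = 1" for n
    using x0 unfolding u_def by simp
  moreover have "(\<lambda>n. A (u n) - l *\<^sub>C u n) \<longlonglongrightarrow> 0"
  proof (rule Lim_null_comparison)
    have "l *\<^sub>C (r *\<^sub>R v) = r *\<^sub>R (l *\<^sub>C v)" for r v
      by (metis scaleC_of_real scaleC_scaleC mult.commute)
    then have "A (u n) - l *\<^sub>C u n = (1 / norm (x n)) *\<^sub>R (A (x n) - l *\<^sub>C x n)" for n
      unfolding u_def by (simp add: scaleR scaleR_diff_right)
    then have "norm (A (u n) - l *\<^sub>C u n) = norm (A (x n) - l *\<^sub>C x n) / norm (x n)" for n
      by simp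
    then show "\<forall>\<^sub>F n in sequentially. norm (A (u n) - l *\<^sub>C u n) \<le> 1 / (real n + 1)"
      using x x0 by (intro always_eventually allI) (simp add: divide_le_eq less_imp_le)
    show "(\<lambda>n. 1 / (real n + 1)) \<longlonglongrightarrow> 0"
      using LIMSEQ_inverse_real_of_nat by (simp add: inverse_eq_divide add.commute)
  qed
  ultimately show ?thesis unfolding approx_eigenvalue_def by blast
qed

end

section \<open>Spectral points on the circle\<close>

lemma closed_range_if_bounded_below:
  fixes T :: "'a::chilbert_space \<Rightarrow> 'a"
  assumes T: "cbounded_linear T" and c: "c > 0" and below: "\<And>x. c * norm x \<le> norm (T x)"
  shows "closed (range T)"
  unfolding closed_sequential_limits
proof (intro allI impI, elim conjE)
  interpret T: cbounded_operator T by unfold_locales (rule T)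
  fix s l assume s: "\<forall>n. s n \<in> range T" and l: "s \<longlonglongrightarrow> l"
  then have "\<forall>n. \<exists>w. s n = T w" by blast
  then obtain z where z: "\<And>n. s n = T (z n)" by metis
  have "Cauchy z"
    unfolding Cauchy_def
  proof (intro allI impI)
    fix e :: real assume "e > 0"
    then obtain M where M: "\<forall>m\<ge>M. \<forall>n\<ge>M. dist (s m) (s n) < c * e"
      using LIMSEQ_imp_Cauchy[OF l] c unfolding Cauchy_def by (meson mult_pos_pos)
    have "c * dist (z m) (z n) \<le> dist (s m) (s n)" for m n
      using below[of "z m - z n"] by (simp add: dist_norm z T.diff)
    then show "\<exists>M. \<forall>m\<ge>M. \<forall>n\<ge>M. dist (z m) (z n) < e"
      using M c by (meson le_less_trans mult_less_cancel_left_pos)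
  qed
  then obtain L where "z \<longlonglongrightarrow> L"
    using Cauchy_convergent convergent_def by blast
  then have "(\<lambda>n. T (z n)) \<longlonglongrightarrow> T L" by (rule T.tendsto)
  moreover have "s = (\<lambda>n. T (z n))" using z by auto
  ultimately have "s \<longlonglongrightarrow> T L" by simp
  then show "l \<in> range T"
    using l LIMSEQ_unique by blast
qed

lemma inverse_if_bounded_below_surj:
  assumes T: "cbounded_linear (T::'a::complex_inner \<Rightarrow> 'a)" and "surj T"
    and c: "c > 0" and below: "\<And>x. c * norm x \<le> norm (T x)"
  obtains B where "cbounded_linear B" "\<And>x. B (T x) = x" "\<And>y. T (B y) = y"
proof
  interpret T: cbounded_operator T by unfold_locales (rule T)
  have "inj T"
  proof (rule injI)
    fix x y assume "T x = T y"
    then have "c * norm (x - y) \<le> 0" using below[of "x - y"] by (simp add: T.diff)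
    then show "x = y" using c by (simp add: mult_le_0_iff)
  qed
  show TB: "T (inv T y) = y" for y
    using \<open>surj T\<close> by (simp add: surj_f_inv_f)
  show "inv T (T x) = x" for x
    using \<open>inj T\<close> by (simp add: inv_f_f)
  show "cbounded_linear (inv T)"
    unfolding cbounded_linear_def
  proof (intro conjI allI exI)
    show "inv T (x + y) = inv T x + inv T y" for x y
      using \<open>inj T\<close> by (metis TB T.add injD)
    show "inv T (a *\<^sub>C x) = a *\<^sub>C inv T x" for a x
      using \<open>inj T\<close> by (metis TB T.scaleC injD)
    show "norm (inv T x) \<le> (1 / c) * norm x" for x
      using below[of "inv T x"] c TB by (simp add: field_simps)
  qed
qed

lemma surj_shift_outside_disc:
  fixes A :: "'a::chilbert_space \<Rightarrow> 'a"
  assumes "cbounded_linear A" and \<mu>: "onorm A < cmod \<mu>"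
  shows "\<exists>x. A x - \<mu> *\<^sub>C x = y"
proof -
  interpret cbounded_operator A by unfold_locales (rule assms(1))
  have \<mu>0: "\<mu> \<noteq> 0" using \<mu> onorm_nonneg by auto
  define f where "f v = (1 / \<mu>) *\<^sub>C (A v - y)" for v
  have "\<exists>!x. f x = x"
  proof (rule banach_fix_type)
    show "0 \<le> R / cmod \<mu>" "R / cmod \<mu> < 1"
      using \<mu> onorm_nonneg by (auto simp: divide_less_eq)
    show "\<forall>v w. dist (f v) (f w) \<le> R / cmod \<mu> * dist v w"
    proof (intro allI)
      fix v w
      have "dist (f v) (f w) = norm (A (v - w)) / cmod \<mu>"
        unfolding f_def dist_norm
        by (simp add: diff scaleC_diff_right[symmetric] norm_scaleC norm_divide)
      also have "\<dots> \<le> R / cmod \<mu> * dist v w"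
        using norm_le[of "v - w"] \<mu>0 by (simp add: dist_norm divide_right_mono)
      finally show "dist (f v) (f w) \<le> R / cmod \<mu> * dist v w" .
    qed
  qed
  then obtain x where "f x = x" by blast
  then have "\<mu> *\<^sub>C x = \<mu> *\<^sub>C f x" by simp
  also have "\<dots> = A x - y"
    unfolding f_def using \<mu>0 by (simp add: scaleC_scaleC scaleC_one)
  finally have "\<mu> *\<^sub>C x = A x - y" .
  then show ?thesis by (intro exI[of _ x]) (simp add: algebra_simps)
qed

text \<open>For $|l| = \|A\|$ the points $(1 + \delta) l$, $\delta > 0$, lie in the resolvent set; solving
  $A x - (1 + \delta) l x = y$ gives an approximate preimage of $y$ under $A - l$, with error
  $\delta |l| \|x\|$, and $\|x\|$ stays bounded when $A - l$ is bounded below.\<close>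

lemma approx_preimage_shift_on_circle:
  fixes A :: "'a::chilbert_space \<Rightarrow> 'a"
  assumes A: "cbounded_linear A" and l: "cmod l = onorm A" "l \<noteq> 0"
    and c: "c > 0" and below: "\<And>x. c * norm x \<le> norm (A x - l *\<^sub>C x)"
    and \<delta>: "\<delta> > 0" "\<delta> * onorm A \<le> c / 2"
  obtains x where "norm ((A x - l *\<^sub>C x) - y) \<le> \<delta> * onorm A * (2 * norm y / c)"
proof -
  interpret cbounded_operator A by unfold_locales (rule A)
  have "cmod (complex_of_real (1 + \<delta>) * l) = (1 + \<delta>) * R"
    using \<delta>(1) l(1) by (simp only: norm_mult norm_of_real abs_of_pos)
  moreover have "R > 0"
    using l by (metis zero_less_norm_iff)
  ultimately have "onorm A < cmod (complex_of_real (1 + \<delta>) * l)"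
    using \<delta>(1) by simp
  then obtain x where x: "A x - (complex_of_real (1 + \<delta>) * l) *\<^sub>C x = y"
    using surj_shift_outside_disc[OF A] by blast
  have "(A x - l *\<^sub>C x) - y = (complex_of_real (1 + \<delta>) * l) *\<^sub>C x - l *\<^sub>C x"
    unfolding x[symmetric] by simp
  also have "\<dots> = (complex_of_real (1 + \<delta>) * l - l) *\<^sub>C x"
    by (rule scaleC_diff_left[symmetric])
  also have "complex_of_real (1 + \<delta>) * l - l = complex_of_real \<delta> * l"
    by (simp add: algebra_simps)
  finally have dist: "norm ((A x - l *\<^sub>C x) - y) = \<delta> * R * norm x"
    using \<delta>(1) l(1) by (simp add: norm_scaleC norm_mult)
  have "c * norm x \<le> norm y + \<delta> * R * norm x"
    using below[of x] norm_triangle_ineq2[of "A x - l *\<^sub>C x" y] dist by simp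
  also have "\<dots> \<le> norm y + c / 2 * norm x"
    using mult_right_mono[OF \<delta>(2) norm_ge_zero[of x]] by simp
  finally have "norm x \<le> 2 * norm y / c"
    using c by (simp add: field_simps)
  then have "norm ((A x - l *\<^sub>C x) - y) \<le> \<delta> * R * (2 * norm y / c)"
    unfolding dist using \<delta>(1) onorm_nonneg by (intro mult_left_mono) auto
  then show ?thesis by (rule that)
qed

lemma dense_range_shift_on_circle:
  fixes A :: "'a::chilbert_space \<Rightarrow> 'a"
  assumes A: "cbounded_linear A" and l: "cmod l = onorm A"
    and c: "c > 0" and below: "\<And>x. c * norm x \<le> norm (A x - l *\<^sub>C x)"
  shows "y \<in> closure (range (\<lambda>x. A x - l *\<^sub>C x))"
proof -
  interpret cbounded_operator A by unfold_locales (rule A)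
  show ?thesis
  proof (cases "l = 0")
    case True
    have "R = 0" using True l by simp
    then have "A x = 0" for x
      using onorm_eq_0[OF bounded_linear] by simp
    then have "c * norm y \<le> 0"
      using below[of y] True by simp
    then have "y = 0"
      using c by (simp add: mult_le_0_iff)
    then have "y \<in> range (\<lambda>x. A x - l *\<^sub>C x)"
      by (intro image_eqI[of _ _ 0]) simp_all
    then show ?thesis by (rule closure_subset[THEN subsetD])
  next
    case False
    have R: "R > 0" using False l by (metis zero_less_norm_iff)
    have "\<exists>x. norm ((A x - l *\<^sub>C x) - y) \<le> norm y / (real n + 1)" for n
    proof -
      define \<delta> where "\<delta> = c / (2 * (real n + 1)) / R"
      have \<delta>R: "\<delta> * R = c / (2 * (real n + 1))"
        unfolding \<delta>_def using R by simp
      have "\<delta> > 0"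
        unfolding \<delta>_def using R c by simp
      moreover have "\<delta> * R \<le> c / 2"
        unfolding \<delta>R using c by (intro divide_left_mono) auto
      moreover have "\<delta> * R * (2 * norm y / c) = norm y / (real n + 1)"
        unfolding \<delta>R using c by (simp add: field_simps)
      ultimately show ?thesis
        using approx_preimage_shift_on_circle[OF A l False c below] by metis
    qed
    then obtain x where x: "\<And>n. norm ((A (x n) - l *\<^sub>C x n) - y) \<le> norm y / (real n + 1)"
      by metis
    have "(\<lambda>n. (A (x n) - l *\<^sub>C x n) - y) \<longlonglongrightarrow> 0"
    proof (rule Lim_null_comparison)
      show "\<forall>\<^sub>F n in sequentially. norm ((A (x n) - l *\<^sub>C x n) - y) \<le> norm y / (real n + 1)"
        using x by simp
      have "(\<lambda>n. norm y * inverse (real (Suc n))) \<longlonglongrightarrow> norm y * 0"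
        by (intro tendsto_intros LIMSEQ_inverse_real_of_nat)
      then show "(\<lambda>n. norm y / (real n + 1)) \<longlonglongrightarrow> 0"
        by (simp add: divide_inverse add.commute)
    qed
    then show ?thesis
      unfolding closure_sequential LIM_zero_iff by (intro exI[of _ "\<lambda>n. A (x n) - l *\<^sub>C x n"]) auto
  qed
qed

lemma approx_eigenvalue_if_spectrum_on_circle:
  fixes A :: "'a::chilbert_space \<Rightarrow> 'a"
  assumes A: "cbounded_linear A" and "l \<in> op_spectrum A" and l: "cmod l = onorm A"
  shows "approx_eigenvalue A l"
proof (rule ccontr)
  interpret cbounded_operator A by unfold_locales (rule A)
  define T where "T x = A x - l *\<^sub>C x" for x
  assume "\<not> approx_eigenvalue A l"
  then have "\<exists>c>0. \<forall>x. c * norm x \<le> norm (T x)"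
    using approx_eigenvalue_if_not_bounded_below unfolding T_def by blast
  then obtain c where c: "c > 0" "\<And>x. c * norm x \<le> norm (T x)" by blast
  note c' = c(2)[unfolded T_def]
  have T: "cbounded_linear T"
    unfolding T_def by (rule cbounded_linear_shift[OF A])
  have "closure (range T) = range T"
    using closed_range_if_bounded_below[OF T c] by (rule closure_closed)
  then have "surj T"
    using dense_range_shift_on_circle[OF A l c(1) c'] unfolding T_def by blast
  then obtain B where B: "cbounded_linear B" "\<And>x. B (T x) = x" "\<And>y. T (B y) = y"
    using inverse_if_bounded_below_surj[OF T _ c] by blast
  have "l \<notin> op_spectrum A"
    unfolding op_spectrum_def using B unfolding T_def by blast
  then show False using \<open>l \<in> op_spectrum A\<close> by blast
qed

section \<open>Convexity of the numerical range\<close>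

lemma exists_unimodular_real_sum:
  fixes p q :: complex
  obtains e where "cmod e = 1" "Im (cnj e * p + e * q) = 0"
proof -
  define d where "d = q - cnj p"
  define e where "e = (if d = 0 then 1 else cnj d / cmod d)"
  have "cmod e = 1"
    unfolding e_def by (simp add: norm_divide)
  moreover have "Im (e * d) = 0"
    unfolding e_def by (simp add: mult.commute complex_mult_cnj flip: of_real_divide)
  then have "Im (cnj e * p + e * q) = 0"
    unfolding d_def by (simp add: algebra_simps)
  ultimately show ?thesis by (rule that)
qed

lemma sesquilinear_segment_nonzero:
  assumes B: "sesquilinear B" and "norm x = 1" "norm y = 1" "B x x \<noteq> B y y"
    and t: "0 \<le> t" "t \<le> 1"
  shows "(1 - t) *\<^sub>R x + t *\<^sub>R y \<noteq> 0"
proof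
  assume z0: "(1 - t) *\<^sub>R x + t *\<^sub>R y = 0"
  have "t \<noteq> 0" using z0 \<open>norm x = 1\<close> by auto
  define c where "c = - (1 - t) / t"
  have "t *\<^sub>R y = - ((1 - t) *\<^sub>R x)"
    using z0 by (simp add: eq_neg_iff_add_eq_0 add.commute)
  then have "(1 / t) *\<^sub>R (t *\<^sub>R y) = (1 / t) *\<^sub>R (- ((1 - t) *\<^sub>R x))" by simp
  then have "y = - (((1 - t) / t) *\<^sub>R x)"
    using \<open>t \<noteq> 0\<close> by simp
  then have "y = c *\<^sub>R x"
    unfolding c_def by (metis minus_divide_left scaleR_minus_left)
  then have "\<bar>c\<bar> = 1" using \<open>norm x = 1\<close> \<open>norm y = 1\<close> by simp
  then have "c * c = 1" by (metis abs_mult_self_eq mult_1)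
  then have "B y y = B x x"
    unfolding \<open>y = c *\<^sub>R x\<close> sesquilinear_scaleR[OF B] by simp
  then show False using \<open>B x x \<noteq> B y y\<close> by simp
qed

lemma sesquilinear_rotate_cross_real:
  assumes B: "sesquilinear B" and y: "norm y = 1" "B y y = 1"
  obtains y' where "norm y' = 1" "B y' y' = 1" "Im (B x y' + B y' x) = 0"
proof -
  have B_scaleC: "B (e *\<^sub>C u) (e *\<^sub>C w) = (e * cnj e) * B u w"
    "B u (e *\<^sub>C w) = cnj e * B u w" "B (e *\<^sub>C w) u = e * B w u" for e u w
    using B unfolding sesquilinear_def by simp_all
  obtain e where e: "cmod e = 1" "Im (cnj e * B x y + e * B y x) = 0"
    by (rule exists_unimodular_real_sum)
  have "e * cnj e = 1" using e(1) complex_norm_square[of e] by simp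
  show ?thesis
  proof (rule that[of "e *\<^sub>C y"])
    show "norm (e *\<^sub>C y) = 1" "B (e *\<^sub>C y) (e *\<^sub>C y) = 1"
      using y e(1) \<open>e * cnj e = 1\<close> by (simp_all add: norm_scaleC B_scaleC(1))
    show "Im (B x (e *\<^sub>C y) + B (e *\<^sub>C y) x) = 0"
      using e(2) by (simp add: B_scaleC)
  qed
qed

text \<open>The core of the Toeplitz--Hausdorff theorem: after a phase change of $y$ the form takes real
  values along the real segment from $x$ to $y$, so the intermediate value theorem applies.\<close>

lemma sesquilinear_values_0_1_interval:
  assumes B: "sesquilinear B" and x: "norm x = 1" "B x x = 0" and y: "norm y = 1" "B y y = 1"
    and v: "0 \<le> v" "v \<le> 1"
  obtains z where "norm z = 1" "B z z = complex_of_real v"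
proof -
  obtain y' where y': "norm y' = 1" "B y' y' = 1" "Im (B x y' + B y' x) = 0"
    using sesquilinear_rotate_cross_real[OF B y] .
  define \<kappa> where "\<kappa> = Re (B x y' + B y' x)"
  have \<kappa>: "B x y' + B y' x = complex_of_real \<kappa>"
    unfolding \<kappa>_def using y'(3) by (simp add: complex_eq_iff)
  define z where "z t = (1 - t) *\<^sub>R x + t *\<^sub>R y'" for t
  have Bz: "B (z t) (z t) = complex_of_real ((1 - t) * t * \<kappa> + t\<^sup>2)" for t
    unfolding z_def sesquilinear_expand_real[OF B] x(2) y'(2) \<kappa> by simp
  have nz: "(norm (z t))\<^sup>2 = (1 - t)\<^sup>2 + t\<^sup>2 + 2 * (1 - t) * t * Re (cinner x y')" for t
    unfolding z_def norm_add_scaleR_sq using x(1) y'(1) by simp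
  have z0: "(norm (z t))\<^sup>2 \<noteq> 0" if "t \<in> {0..1}" for t
    using sesquilinear_segment_nonzero[OF B x(1) y'(1)] x(2) y'(2) that unfolding z_def by simp
  define \<phi> where "\<phi> t = ((1 - t) * t * \<kappa> + t\<^sup>2) / (norm (z t))\<^sup>2" for t
  have "continuous_on {0..1} \<phi>"
    unfolding \<phi>_def nz using z0[unfolded nz] by (intro continuous_intros) auto
  moreover have "\<phi> 0 = 0" "\<phi> 1 = 1"
    unfolding \<phi>_def nz by simp_all
  ultimately obtain t where t: "t \<in> {0..1}" "\<phi> t = v"
    using IVT'[of \<phi> 0 v 1] v by auto
  then have "z t \<noteq> 0" using z0 by force
  show ?thesis
  proof
    show "norm ((1 / norm (z t)) *\<^sub>R z t) = 1"
      using \<open>z t \<noteq> 0\<close> by simp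
    have "B ((1 / norm (z t)) *\<^sub>R z t) ((1 / norm (z t)) *\<^sub>R z t)
        = complex_of_real (1 / norm (z t) * (1 / norm (z t)) * ((1 - t) * t * \<kappa> + t\<^sup>2))"
      unfolding sesquilinear_scaleR[OF B] Bz by (simp only: of_real_mult)
    also have "\<dots> = complex_of_real v"
      using t(2) unfolding \<phi>_def by (simp add: power2_eq_square)
    finally show "B ((1 / norm (z t)) *\<^sub>R z t) ((1 / norm (z t)) *\<^sub>R z t) = complex_of_real v" .
  qed
qed

lemma (in cbounded_operator) convex_num_range: "convex (num_range A)"
  unfolding convex_def
proof (intro ballI allI impI)
  fix p1 p2 and u v :: real
  assume p: "p1 \<in> num_range A" "p2 \<in> num_range A" and uv: "0 \<le> u" "0 \<le> v" "u + v = 1"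
  obtain x y where x: "norm x = 1" "p1 = cinner (A x) x" and y: "norm y = 1" "p2 = cinner (A y) y"
    using p unfolding num_range_def by blast
  have uv_eq: "u *\<^sub>R p1 + v *\<^sub>R p2 = p1 + complex_of_real v * (p2 - p1)"
  proof -
    have "u = 1 - v" using uv by simp
    then show ?thesis by (simp only:) (simp add: scaleR_conv_of_real algebra_simps)
  qed
  show "u *\<^sub>R p1 + v *\<^sub>R p2 \<in> num_range A"
  proof (cases "p1 = p2")
    case True
    show ?thesis using p(1) unfolding uv_eq by (simp add: True)
  next
    case False
    define B where "B a b = (cinner (A a) b - p1 * cinner a b) / (p2 - p1)" for a b
    have "sesquilinear B"
      using sesquilinear_lincomb[OF sesquilinear_compose[OF sesquilinear_cinner cbounded_linear
            cbounded_linear_id] sesquilinear_cinner, of "1 / (p2 - p1)" "- p1 / (p2 - p1)"]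
      unfolding B_def by (simp add: diff_divide_distrib)
    moreover have "B x x = 0" "B y y = 1"
      unfolding B_def using x y False by (simp_all add: cinner_self)
    moreover have "v \<le> 1" using uv by simp
    ultimately obtain z where z: "norm z = 1" "B z z = complex_of_real v"
      using sesquilinear_values_0_1_interval x(1) y(1) uv(2) by metis
    then have "cinner (A z) z = p1 + complex_of_real v * (p2 - p1)"
      unfolding B_def using False by (simp add: cinner_self field_simps)
    then show ?thesis
      unfolding uv_eq num_range_def using z(1) by (metis (mono_tags, lifting) mem_Collect_eq)
  qed
qed

section \<open>Chords of the circle\<close>

context cbounded_operator
begin

lemma psd_defect_form:
  "psd_form (\<lambda>u v. complex_of_real (R\<^sup>2) * cinner u v - cinner (A u) (A v))"
  unfolding psd_form_def
proof (intro conjI allI)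
  show "sesquilinear (\<lambda>u v. complex_of_real (R\<^sup>2) * cinner u v - cinner (A u) (A v))"
    using sesquilinear_lincomb[OF sesquilinear_cinner
        sesquilinear_compose[OF sesquilinear_cinner cbounded_linear cbounded_linear],
        of "complex_of_real (R\<^sup>2)" "-1"]
    by simp
  show "complex_of_real (R\<^sup>2) * cinner u v - cinner (A u) (A v)
      = cnj (complex_of_real (R\<^sup>2) * cinner v u - cinner (A v) (A u))" for u v
    by (metis cinner_commute complex_cnj_complex_of_real complex_cnj_diff complex_cnj_mult)
  show "0 \<le> Re (complex_of_real (R\<^sup>2) * cinner u u - cinner (A u) (A u))" for u
    using power_mono[OF norm_le[of u] norm_ge_zero]
    by (simp add: Re_cinner_self power_mult_distrib)
qed

lemma defect_tendsto_zero:
  assumes x: "\<And>n. norm (x n) = 1" "(\<lambda>n. norm (A (x n))) \<longlonglongrightarrow> R"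
    and w: "\<And>n. norm (w n) \<le> K"
  shows "(\<lambda>n. complex_of_real (R\<^sup>2) * cinner (x n) (w n) - cinner (A (x n)) (A (w n))) \<longlonglongrightarrow> 0"
proof (rule psd_form_tendsto_zero[OF psd_defect_form])
  have "(\<lambda>n. R\<^sup>2 - (norm (A (x n)))\<^sup>2) \<longlonglongrightarrow> R\<^sup>2 - R\<^sup>2"
    by (intro tendsto_intros x(2))
  then show "(\<lambda>n. Re (complex_of_real (R\<^sup>2) * cinner (x n) (x n) - cinner (A (x n)) (A (x n))))
      \<longlonglongrightarrow> 0"
    using x(1) by (simp add: Re_cinner_self)
  show "Re (complex_of_real (R\<^sup>2) * cinner (w n) (w n) - cinner (A (w n)) (A (w n))) \<le> R\<^sup>2 * K\<^sup>2"
    for n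
  proof -
    have "R\<^sup>2 * (norm (w n))\<^sup>2 \<le> R\<^sup>2 * K\<^sup>2"
      using w[of n] by (intro mult_left_mono power_mono) auto
    moreover have "Re (complex_of_real (R\<^sup>2) * cinner (w n) (w n) - cinner (A (w n)) (A (w n)))
        = R\<^sup>2 * (norm (w n))\<^sup>2 - (norm (A (w n)))\<^sup>2"
      by (simp add: Re_cinner_self)
    ultimately show ?thesis
      using zero_le_power2[of "norm (A (w n))"] by linarith
  qed
qed

text \<open>Approximate eigenvectors for distinct points of the circle are asymptotically orthogonal:
  the defect form $\|A\|^2\langle u, v\rangle - \langle Au, Av\rangle$ is positive semidefinite and
  vanishes asymptotically on them, while it equals $(\|A\|^2 - a\bar b)\langle x_n, y_n\rangle$ up to
  a null sequence.\<close>

lemma approx_eigenvectors_orthogonal: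
  assumes x: "\<And>n. norm (x n) = 1" "(\<lambda>n. A (x n) - a *\<^sub>C x n) \<longlonglongrightarrow> 0"
    and y: "\<And>n. norm (y n) = 1" "(\<lambda>n. A (y n) - b *\<^sub>C y n) \<longlonglongrightarrow> 0"
    and a: "cmod a = R" and b: "cmod b = R" and "a \<noteq> b"
  shows "(\<lambda>n. cinner (x n) (y n)) \<longlonglongrightarrow> 0"
proof -
  define k where "k = complex_of_real (R\<^sup>2) - a * cnj b"
  have "k \<noteq> 0"
  proof
    assume "k = 0"
    then have "a * cnj b = b * cnj b"
      unfolding k_def using b complex_norm_square[of b] by simp
    moreover have "cnj b \<noteq> 0" using b a \<open>a \<noteq> b\<close> by auto
    ultimately show False using \<open>a \<noteq> b\<close> by simp
  qed
  have "(\<lambda>n. cinner (A (x n) - a *\<^sub>C x n) (A (y n)) + a * cinner (x n) (A (y n) - b *\<^sub>C y n))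
      \<longlonglongrightarrow> 0 + a * 0"
    using x y norm_le_unit
    by (intro tendsto_intros cinner_tendsto_zero_left cinner_tendsto_zero_right) auto
  moreover have "(\<lambda>n. complex_of_real (R\<^sup>2) * cinner (x n) (y n) - cinner (A (x n)) (A (y n)))
      \<longlonglongrightarrow> 0"
    using defect_tendsto_zero[OF x(1) norm_tendsto_if_approx_eigenvector[OF x a], of y 1] y(1)
    by simp
  ultimately have "(\<lambda>n. k * cinner (x n) (y n)) \<longlonglongrightarrow> 0 + a * 0 + 0"
    unfolding k_def
    by (rule tendsto_add[THEN tendsto_cong[THEN iffD1, rotated]])
      (simp add: cinner_diff_left cinner_diff_right cinner_scaleC_left cinner_scaleC_right
        algebra_simps)
  then have "(\<lambda>n. (k * cinner (x n) (y n)) / k) \<longlonglongrightarrow> (0 + a * 0 + 0) / k"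
    by (rule tendsto_divide[OF _ tendsto_const \<open>k \<noteq> 0\<close>])
  then show ?thesis using \<open>k \<noteq> 0\<close> by simp
qed

lemma approx_eigenvectors_cross_terms:
  assumes x: "\<And>n. norm (x n) = 1" "(\<lambda>n. A (x n) - a *\<^sub>C x n) \<longlonglongrightarrow> 0"
    and y: "\<And>n. norm (y n) = 1" "(\<lambda>n. A (y n) - b *\<^sub>C y n) \<longlonglongrightarrow> 0"
    and a: "cmod a = R" and b: "cmod b = R" and "a \<noteq> b"
  shows "(\<lambda>n. cinner (A (x n)) (y n)) \<longlonglongrightarrow> 0" "(\<lambda>n. cinner (A (y n)) (x n)) \<longlonglongrightarrow> 0"
    and "(\<lambda>n. cinner (A (x n)) (A (y n))) \<longlonglongrightarrow> 0"
proof -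
  have g: "(\<lambda>n. cinner (x n) (y n)) \<longlonglongrightarrow> 0"
    by (rule approx_eigenvectors_orthogonal[OF assms])
  have "(\<lambda>n. cinner (A (x n) - a *\<^sub>C x n) (y n) + a * cinner (x n) (y n)) \<longlonglongrightarrow> 0 + a * 0"
    using y(1) by (intro tendsto_intros g cinner_tendsto_zero_left[OF x(2), of y 1]) simp
  then show "(\<lambda>n. cinner (A (x n)) (y n)) \<longlonglongrightarrow> 0"
    by (simp add: cinner_diff_left cinner_scaleC_left)
  have "(\<lambda>n. cinner (A (y n) - b *\<^sub>C y n) (x n) + b * cnj (cinner (x n) (y n))) \<longlonglongrightarrow> 0 + b * cnj 0"
    using x(1) by (intro tendsto_intros g cinner_tendsto_zero_left[OF y(2), of x 1]) simp
  then show "(\<lambda>n. cinner (A (y n)) (x n)) \<longlonglongrightarrow> 0"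
    by (simp add: cinner_diff_left cinner_scaleC_left flip: cinner_commute)
  have "(\<lambda>n. complex_of_real (R\<^sup>2) * cinner (x n) (y n) - cinner (A (x n)) (A (y n))) \<longlonglongrightarrow> 0"
    using defect_tendsto_zero[OF x(1) norm_tendsto_if_approx_eigenvector[OF x a], of y 1] y(1)
    by simp
  then have "(\<lambda>n. complex_of_real (R\<^sup>2) * cinner (x n) (y n)
      - (complex_of_real (R\<^sup>2) * cinner (x n) (y n) - cinner (A (x n)) (A (y n))))
      \<longlonglongrightarrow> complex_of_real (R\<^sup>2) * 0 - 0"
    by (intro tendsto_intros g)
  then show "(\<lambda>n. cinner (A (x n)) (A (y n))) \<longlonglongrightarrow> 0" by simp
qed

lemma max_num_range_if_approx_eigenvectors:
  assumes x: "\<And>n. norm (x n) = 1" "(\<lambda>n. A (x n) - a *\<^sub>C x n) \<longlonglongrightarrow> 0"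
    and y: "\<And>n. norm (y n) = 1" "(\<lambda>n. A (y n) - b *\<^sub>C y n) \<longlonglongrightarrow> 0"
    and a: "cmod a = R" and b: "cmod b = R" and "a \<noteq> b" and \<alpha>\<beta>: "\<alpha>\<^sup>2 + \<beta>\<^sup>2 = 1"
  shows "complex_of_real (\<alpha>\<^sup>2) * a + complex_of_real (\<beta>\<^sup>2) * b \<in> max_num_range A"
proof -
  note g = approx_eigenvectors_orthogonal[OF assms(1-7)]
  note cross = approx_eigenvectors_cross_terms[OF assms(1-7)]
  define z where "z n = \<alpha> *\<^sub>R x n + \<beta> *\<^sub>R y n" for n
  show ?thesis
  proof (rule max_num_range_if_seq_limits)
    have "(\<lambda>n. \<alpha>\<^sup>2 * (norm (x n))\<^sup>2 + \<beta>\<^sup>2 * (norm (y n))\<^sup>2 + 2 * \<alpha> * \<beta> * Re (cinner (x n) (y n)))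
        \<longlonglongrightarrow> \<alpha>\<^sup>2 * 1 + \<beta>\<^sup>2 * 1 + 2 * \<alpha> * \<beta> * Re 0"
      using x(1) y(1) by (intro tendsto_intros g) simp_all
    then show "(\<lambda>n. (norm (z n))\<^sup>2) \<longlonglongrightarrow> 1"
      unfolding z_def norm_add_scaleR_sq using \<alpha>\<beta> by simp
    have "(\<lambda>n. \<alpha>\<^sup>2 * (norm (A (x n)))\<^sup>2 + \<beta>\<^sup>2 * (norm (A (y n)))\<^sup>2
        + 2 * \<alpha> * \<beta> * Re (cinner (A (x n)) (A (y n)))) \<longlonglongrightarrow> \<alpha>\<^sup>2 * R\<^sup>2 + \<beta>\<^sup>2 * R\<^sup>2 + 2 * \<alpha> * \<beta> * Re 0"
      by (intro tendsto_intros cross(3) norm_tendsto_if_approx_eigenvector[OF x a]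
          norm_tendsto_if_approx_eigenvector[OF y b])
    moreover have "\<alpha>\<^sup>2 * R\<^sup>2 + \<beta>\<^sup>2 * R\<^sup>2 + 2 * \<alpha> * \<beta> * Re 0 = 1 * R\<^sup>2"
      using \<alpha>\<beta> by (simp add: ring_distribs(2)[symmetric])
    ultimately show "(\<lambda>n. (norm (A (z n)))\<^sup>2) \<longlonglongrightarrow> 1 * R\<^sup>2"
      unfolding z_def add scaleR norm_add_scaleR_sq by (simp only:)
    have expand: "cinner (A (z n)) (z n) = complex_of_real (\<alpha>\<^sup>2) * cinner (A (x n)) (x n)
        + complex_of_real (\<alpha> * \<beta>) * (cinner (A (x n)) (y n) + cinner (A (y n)) (x n))
        + complex_of_real (\<beta>\<^sup>2) * cinner (A (y n)) (y n)" for n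
      unfolding z_def
      by (rule sesquilinear_expand_real[OF sesquilinear_compose[OF sesquilinear_cinner
            cbounded_linear cbounded_linear_id]])
    have "(\<lambda>n. cinner (A (z n)) (z n))
      \<longlonglongrightarrow> complex_of_real (\<alpha>\<^sup>2) * a + complex_of_real (\<alpha> * \<beta>) * (0 + 0) + complex_of_real (\<beta>\<^sup>2) * b"
      unfolding expand
      by (intro tendsto_intros cross(1,2) cinner_tendsto_if_approx_eigenvector[OF x]
          cinner_tendsto_if_approx_eigenvector[OF y])
    then show "(\<lambda>n. cinner (A (z n)) (z n))
        \<longlonglongrightarrow> complex_of_real 1 * (complex_of_real (\<alpha>\<^sup>2) * a + complex_of_real (\<beta>\<^sup>2) * b)"
      by simp
  qed simp
qed

lemma closed_segment_subset_max_num_range: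
  assumes a: "a \<in> closure (num_range A)" "cmod a = R"
    and b: "b \<in> closure (num_range A)" "cmod b = R" and "a \<noteq> b"
  shows "closed_segment a b \<subseteq> max_num_range A"
proof
  fix p assume "p \<in> closed_segment a b"
  then obtain t where t: "0 \<le> t" "t \<le> 1" "p = (1 - t) *\<^sub>R a + t *\<^sub>R b"
    unfolding closed_segment_def by blast
  obtain x where x: "\<And>n. norm (x n) = 1" "(\<lambda>n. cinner (A (x n)) (x n)) \<longlonglongrightarrow> a"
    using a(1) unfolding closure_num_range_iff_seq by blast
  obtain y where y: "\<And>n. norm (y n) = 1" "(\<lambda>n. cinner (A (y n)) (y n)) \<longlonglongrightarrow> b"
    using b(1) unfolding closure_num_range_iff_seq by blast
  have "(sqrt (1 - t))\<^sup>2 + (sqrt t)\<^sup>2 = 1"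
    using t by simp
  from max_num_range_if_approx_eigenvectors[OF x(1) approx_eigenvector_if_on_circle[OF x a(2)]
      y(1) approx_eigenvector_if_on_circle[OF y b(2)] a(2) b(2) \<open>a \<noteq> b\<close> this]
  show "p \<in> max_num_range A"
    using t by (simp add: scaleR_conv_of_real)
qed

end

section \<open>Boundary points inside the disc\<close>

lemma inside_disc_chord:
  fixes \<tau> :: complex
  assumes "cmod \<tau> < R"
  defines "r \<equiv> sqrt (R\<^sup>2 - (Re \<tau>)\<^sup>2)"
  shows "r > 0" "R\<^sup>2 = (Re \<tau>)\<^sup>2 + r\<^sup>2" "\<bar>Im \<tau>\<bar> < r"
proof -
  have "(cmod \<tau>)\<^sup>2 < R\<^sup>2"
    using assms(1) by (simp add: power_strict_mono)
  then have lt: "(Re \<tau>)\<^sup>2 + (Im \<tau>)\<^sup>2 < R\<^sup>2"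
    by (simp add: cmod_power2)
  then have "R\<^sup>2 - (Re \<tau>)\<^sup>2 > 0"
    using zero_le_power2[of "Im \<tau>"] by linarith
  then show "r > 0" "R\<^sup>2 = (Re \<tau>)\<^sup>2 + r\<^sup>2"
    unfolding r_def by simp_all
  then show "\<bar>Im \<tau>\<bar> < r"
    using power2_less_imp_less[of "\<bar>Im \<tau>\<bar>" r] lt by simp
qed

context cbounded_operator
begin

lemma psd_support_form:
  assumes sup: "\<And>y. norm y = 1 \<Longrightarrow> Re (cinner (A y) y) \<le> m"
  shows "psd_form (\<lambda>u v. complex_of_real m * cinner u v - (cinner (A u) v + cinner u (A v)) / 2)"
  unfolding psd_form_def
proof (intro conjI allI)
  have "sesquilinear (\<lambda>u v. cinner (A u) v + cinner u (A v))"
    using sesquilinear_lincomb[OF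
        sesquilinear_compose[OF sesquilinear_cinner cbounded_linear cbounded_linear_id]
        sesquilinear_compose[OF sesquilinear_cinner cbounded_linear_id cbounded_linear], of 1 1]
    by simp
  then show "sesquilinear
      (\<lambda>u v. complex_of_real m * cinner u v - (cinner (A u) v + cinner u (A v)) / 2)"
    using sesquilinear_lincomb[OF sesquilinear_cinner, of _ "complex_of_real m" "- 1 / 2"]
    by (simp add: diff_divide_distrib)
  show "complex_of_real m * cinner u v - (cinner (A u) v + cinner u (A v)) / 2
      = cnj (complex_of_real m * cinner v u - (cinner (A v) u + cinner v (A u)) / 2)" for u v
    by (simp add: cinner_commute[of u v] cinner_commute[of "A u" v] cinner_commute[of u "A v"])
  show "0 \<le> Re (complex_of_real m * cinner u u - (cinner (A u) u + cinner u (A u)) / 2)" for u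
  proof (cases "u = 0")
    case False
    have "Re (cinner (A u) u) / (norm u)\<^sup>2 \<le> m"
      using sup[of "(1 / norm u) *\<^sub>R u"] cinner_normalize[OF False] by simp
    then have "Re (cinner (A u) u) \<le> m * (norm u)\<^sup>2"
      using False by (simp add: divide_le_eq)
    moreover have "Re (cinner u (A u)) = Re (cinner (A u) u)"
      by (subst cinner_commute) simp
    ultimately show ?thesis by (simp add: Re_cinner_self)
  qed simp
qed

text \<open>The limiting Gram data of $x_n$ and $A x_n$ for a sequence maximizing both $\|A x_n\|$ and
  $\mathrm{Re}\,\langle A x_n, x_n\rangle$ are forced by the asymptotic vanishing of the defect form
  and of the support form on $(x_n, A x_n)$.\<close>

lemma maximizing_seq_moment_AAx_Ax:
  assumes x: "\<And>n. norm (x n) = 1" "(\<lambda>n. norm (A (x n))) \<longlonglongrightarrow> R"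
      "(\<lambda>n. cinner (A (x n)) (x n)) \<longlonglongrightarrow> \<tau>"
  shows "(\<lambda>n. cinner (A (A (x n))) (A (x n))) \<longlonglongrightarrow> complex_of_real (R\<^sup>2) * \<tau>"
proof -
  have "(\<lambda>n. cnj (complex_of_real (R\<^sup>2) * cinner (x n) (A (x n)) - cinner (A (x n)) (A (A (x n)))))
      \<longlonglongrightarrow> cnj 0"
    by (intro tendsto_cnj defect_tendsto_zero[OF x(1,2), of _ R] norm_le_unit[OF x(1)])
  then have "(\<lambda>n. complex_of_real (R\<^sup>2) * cinner (A (x n)) (x n)
      - (complex_of_real (R\<^sup>2) * cinner (A (x n)) (x n) - cinner (A (A (x n))) (A (x n))))
      \<longlonglongrightarrow> complex_of_real (R\<^sup>2) * \<tau> - 0"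
    by (intro tendsto_intros x(3)) (simp add: cnj_cinner)
  then show ?thesis by simp
qed

lemma maximizing_seq_moment_AAx_x:
  assumes sup: "\<And>y. norm y = 1 \<Longrightarrow> Re (cinner (A y) y) \<le> m"
    and x: "\<And>n. norm (x n) = 1" "(\<lambda>n. norm (A (x n))) \<longlonglongrightarrow> R"
      "(\<lambda>n. cinner (A (x n)) (x n)) \<longlonglongrightarrow> \<tau>"
    and "Re \<tau> = m"
  shows "(\<lambda>n. cinner (A (A (x n))) (x n)) \<longlonglongrightarrow> 2 * complex_of_real m * \<tau> - complex_of_real (R\<^sup>2)"
proof -
  let ?P = "\<lambda>u v. complex_of_real m * cinner u v - (cinner (A u) v + cinner u (A v)) / 2"
  have "(\<lambda>n. ?P (x n) (A (x n))) \<longlonglongrightarrow> 0"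
  proof (rule psd_form_tendsto_zero[OF psd_support_form[OF sup]])
    have "Re (?P (x n) (x n)) = m - Re (cinner (A (x n)) (x n))" for n
      using x(1) Re_cinner_commute[of "x n" "A (x n)"] by (simp add: Re_cinner_self)
    moreover have "(\<lambda>n. m - Re (cinner (A (x n)) (x n))) \<longlonglongrightarrow> m - Re \<tau>"
      by (intro tendsto_intros x(3))
    ultimately show "(\<lambda>n. Re (?P (x n) (x n))) \<longlonglongrightarrow> 0"
      using \<open>Re \<tau> = m\<close> by simp
    show "Re (?P (A (x n)) (A (x n))) \<le> (\<bar>m\<bar> + R) * R\<^sup>2" for n
    proof -
      let ?w = "A (x n)"
      have "Re (?P ?w ?w) = m * (norm ?w)\<^sup>2 - Re (cinner (A ?w) ?w)"
        using Re_cinner_commute[of ?w "A ?w"] by (simp add: Re_cinner_self)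
      also have "\<dots> \<le> \<bar>m\<bar> * (norm ?w)\<^sup>2 + R * (norm ?w)\<^sup>2"
        using cmod_cinner_self_le[of ?w] abs_Re_le_cmod[of "cinner (A ?w) ?w"]
          mult_right_mono[OF abs_ge_self[of m] zero_le_power2[of "norm ?w"]]
        by linarith
      also have "\<dots> \<le> (\<bar>m\<bar> + R) * R\<^sup>2"
        using norm_le_unit[OF x(1)] onorm_nonneg
        by (simp add: ring_distribs(2)[symmetric] mult_left_mono power_mono)
      finally show ?thesis .
    qed
  qed
  then have "(\<lambda>n. 2 * complex_of_real m * cinner (A (x n)) (x n)
      - complex_of_real ((norm (A (x n)))\<^sup>2) - 2 * cnj (?P (x n) (A (x n))))
      \<longlonglongrightarrow> 2 * complex_of_real m * \<tau> - complex_of_real (R\<^sup>2) - 2 * cnj 0"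
    by (intro tendsto_intros x(2,3))
  moreover have "2 * complex_of_real m * cinner (A (x n)) (x n)
      - complex_of_real ((norm (A (x n)))\<^sup>2) - 2 * cnj (?P (x n) (A (x n)))
      = cinner (A (A (x n))) (x n)" for n
    by (simp add: cinner_self cnj_cinner algebra_simps)
  ultimately show ?thesis by simp
qed

end

lemma support_chord_weights:
  fixes m \<mu> r \<sigma> :: real
  assumes r: "r > 0" and \<sigma>: "\<sigma>\<^sup>2 = 1"
    and s: "s = Complex 0 (\<sigma> / r)" and c: "c = 1 - s * complex_of_real m"
    and \<tau>: "\<tau> = Complex m \<mu>" and R2: "R2 = complex_of_real (m\<^sup>2 + r\<^sup>2)"
    and L: "L = complex_of_real (2 - 2 * \<sigma> * \<mu> / r)"
  shows "c * cnj c + c * cnj s * cnj \<tau> + s * cnj c * \<tau> + s * cnj s * R2 = L"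
    and "c * cnj c * \<tau> + c * cnj s * R2 + s * cnj c * (2 * complex_of_real m * \<tau> - R2)
      + s * cnj s * (R2 * \<tau>) = L * Complex m (- \<sigma> * r)"
proof -
  have \<sigma>\<sigma>: "\<sigma> * (\<sigma> * X) = X" for X :: real
    using \<sigma> by (simp add: mult.assoc[symmetric] power2_eq_square)
  show "c * cnj c + c * cnj s * cnj \<tau> + s * cnj c * \<tau> + s * cnj s * R2 = L"
    unfolding c s \<tau> R2 L using r
    by (simp add: complex_eq_iff power2_eq_square field_simps \<sigma>\<sigma>)
  show "c * cnj c * \<tau> + c * cnj s * R2 + s * cnj c * (2 * complex_of_real m * \<tau> - R2)
      + s * cnj s * (R2 * \<tau>) = L * Complex m (- \<sigma> * r)"
    unfolding c s \<tau> R2 L using r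
    by (simp add: complex_eq_iff power2_eq_square field_simps \<sigma>\<sigma>)
qed

text \<open>If $\mathrm{Re}\,W(A) \le m$ and $x_n$ is a maximizing sequence whose numerical values tend to a
  point $\tau$ of the support line strictly inside the disc, then the vectors
  $c\,x_n + s\,A x_n$ with $s = i\sigma/r$, $c = 1 - s m$, $r = \sqrt{\|A\|^2 - m^2}$ have numerical
  values tending to the endpoint $m - i\sigma r$ of the chord cut out by the support line.\<close>

lemma (in cbounded_operator) support_chord_endpoint_in_closure:
  assumes sup: "\<And>y. norm y = 1 \<Longrightarrow> Re (cinner (A y) y) \<le> m"
    and x: "\<And>n. norm (x n) = 1" "(\<lambda>n. norm (A (x n))) \<longlonglongrightarrow> R"
      "(\<lambda>n. cinner (A (x n)) (x n)) \<longlonglongrightarrow> \<tau>"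
    and \<tau>: "Re \<tau> = m" "cmod \<tau> < R" and \<sigma>: "\<sigma>\<^sup>2 = 1"
  shows "Complex m (- \<sigma> * sqrt (R\<^sup>2 - m\<^sup>2)) \<in> closure (num_range A)"
proof -
  define \<mu> r where "\<mu> = Im \<tau>" and "r = sqrt (R\<^sup>2 - m\<^sup>2)"
  have \<tau>_eq: "\<tau> = Complex m \<mu>"
    unfolding \<mu>_def using \<tau>(1) by (simp add: complex_eq_iff)
  note chord = inside_disc_chord[OF \<tau>(2), unfolded \<tau>(1) \<mu>_def[symmetric], folded r_def]
  define s c where "s = Complex 0 (\<sigma> / r)" and "c = 1 - s * complex_of_real m"
  define L where "L = 2 - 2 * \<sigma> * \<mu> / r"
  note weights = support_chord_weights[OF chord(1) \<sigma> s_def c_def \<tau>_eq refl refl,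
      folded chord(2) L_def]
  have "\<sigma> * \<mu> \<le> \<bar>\<mu>\<bar>"
    using \<sigma> by (auto simp: power2_eq_1_iff)
  then have "L > 0"
    unfolding L_def using chord(1,3) by (simp add: divide_less_eq)
  define u where "u n = c *\<^sub>C x n + s *\<^sub>C A (x n)" for n
  note expand_cinner = sesquilinear_expand[OF sesquilinear_cinner]
  note expand_num = sesquilinear_expand[OF sesquilinear_compose[OF sesquilinear_cinner
        cbounded_linear cbounded_linear_id]]
  have xx: "cinner (x n) (x n) = 1" for n
    using x(1) by (simp add: cinner_self)
  have xAx: "(\<lambda>n. cinner (x n) (A (x n))) \<longlonglongrightarrow> cnj \<tau>"
    using tendsto_cnj[OF x(3)] by (simp add: cnj_cinner)
  have "(\<lambda>n. complex_of_real ((norm (A (x n)))\<^sup>2)) \<longlonglongrightarrow> complex_of_real (R\<^sup>2)"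
    by (intro tendsto_intros x(2))
  then have AxAx: "(\<lambda>n. cinner (A (x n)) (A (x n))) \<longlonglongrightarrow> complex_of_real (R\<^sup>2)"
    by (simp add: cinner_self)
  show ?thesis
  proof (rule closure_num_range_if_seq_limits)
    have "(\<lambda>n. cinner (u n) (u n)) \<longlonglongrightarrow> c * cnj c * 1 + c * cnj s * cnj \<tau> + s * cnj c * \<tau>
        + s * cnj s * complex_of_real (R\<^sup>2)"
      unfolding u_def expand_cinner xx by (intro tendsto_intros x(3) xAx AxAx)
    then have "(\<lambda>n. Re (cinner (u n) (u n))) \<longlonglongrightarrow> Re (complex_of_real L)"
      using weights(1) by (intro tendsto_Re) simp
    then show "(\<lambda>n. (norm (u n))\<^sup>2) \<longlonglongrightarrow> L"
      by (simp add: Re_cinner_self)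
    show "(\<lambda>n. cinner (A (u n)) (u n)) \<longlonglongrightarrow> complex_of_real L * Complex m (- \<sigma> * sqrt (R\<^sup>2 - m\<^sup>2))"
      unfolding u_def expand_num r_def[symmetric] weights(2)[symmetric]
      by (intro tendsto_intros x(3) AxAx maximizing_seq_moment_AAx_Ax[OF x]
          maximizing_seq_moment_AAx_x[OF sup x \<tau>(1)])
  qed (rule \<open>L > 0\<close>)
qed

lemma (in cbounded_operator) support_chord_endpoint_in_closure_rotated:
  assumes d: "cmod d = 1" and sup: "\<And>z. z \<in> num_range A \<Longrightarrow> Re (cnj d * z) \<le> m"
    and p: "p \<in> max_num_range A" "Re (cnj d * p) = m" "cmod p < R" and \<sigma>: "\<sigma>\<^sup>2 = 1"
  shows "d * Complex m (- \<sigma> * sqrt (R\<^sup>2 - m\<^sup>2)) \<in> closure (num_range A)"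
proof -
  define T where "T x = cnj d *\<^sub>C A x" for x
  interpret T: cbounded_operator T
    unfolding T_def by unfold_locales (rule cbounded_linear_scaleC_left[OF cbounded_linear])
  have TR: "onorm T = R"
    unfolding T_def using d by (simp add: onorm_scaleC_unimodular)
  have T: "norm (T y) = norm (A y)" "cinner (T y) y = cnj d * cinner (A y) y" for y
    unfolding T_def using d by (simp_all add: norm_scaleC cinner_scaleC_left)
  obtain x where x: "\<And>n. norm (x n) = 1" "(\<lambda>n. norm (A (x n))) \<longlonglongrightarrow> R"
    "(\<lambda>n. cinner (A (x n)) (x n)) \<longlonglongrightarrow> p"
    using p(1) unfolding max_num_range_def by blast
  have "Complex m (- \<sigma> * sqrt (R\<^sup>2 - m\<^sup>2)) \<in> closure (num_range T)"
  proof (rule T.support_chord_endpoint_in_closure[of m x "cnj d * p", unfolded TR])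
    show "Re (cinner (T y) y) \<le> m" if "norm y = 1" for y
      unfolding T(2) using sup that unfolding num_range_def by blast
    show "(\<lambda>n. cinner (T (x n)) (x n)) \<longlonglongrightarrow> cnj d * p"
      unfolding T(2) by (intro tendsto_intros x(3))
  qed (use x p(2,3) d \<sigma> in \<open>simp_all add: T(1) norm_mult\<close>)
  then obtain u where u: "\<And>n. norm (u n) = 1"
    "(\<lambda>n. cinner (T (u n)) (u n)) \<longlonglongrightarrow> Complex m (- \<sigma> * sqrt (R\<^sup>2 - m\<^sup>2))"
    unfolding T.closure_num_range_iff_seq by blast
  have "d * cnj d = 1"
    using d complex_norm_square[of d] by simp
  then have "(\<lambda>n. cinner (A (u n)) (u n)) \<longlonglongrightarrow> d * Complex m (- \<sigma> * sqrt (R\<^sup>2 - m\<^sup>2))"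
    using tendsto_mult_left[OF u(2), of d] unfolding T(2) by (simp add: mult.assoc[symmetric])
  then show ?thesis
    unfolding closure_num_range_iff_seq using u(1) by blast
qed

lemma inner_complex_Re: "a \<bullet> z = Re (cnj a * z)"
  by (simp add: inner_complex_def)

lemma convex_support_line_complex:
  fixes S :: "complex set"
  assumes "convex S" "p \<in> closure S" "p \<notin> interior S"
  obtains d where "cmod d = 1" "\<And>z. z \<in> S \<Longrightarrow> Re (cnj d * z) \<le> Re (cnj d * p)"
proof -
  have "\<exists>a. a \<noteq> 0 \<and> (\<forall>z\<in>S. a \<bullet> p \<le> a \<bullet> z)"
  proof (cases "aff_dim S = 2")
    case True
    then have "rel_interior S = interior S"
      by (intro interior_rel_interior) simp
    then obtain a where "a \<noteq> 0" "\<And>y. y \<in> closure S \<Longrightarrow> a \<bullet> p \<le> a \<bullet> y"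
      using supporting_hyperplane_relative_frontier[OF assms(1,2)] assms(3) by metis
    then show ?thesis using closure_subset by blast
  next
    case False
    then have "aff_dim S < DIM(complex)"
      using aff_dim_le_DIM[of S] by simp
    then obtain a b where ab: "a \<noteq> 0" "S \<subseteq> {x. a \<bullet> x = b}"
      by (rule aff_lowdim_subset_hyperplane)
    have "closure S \<subseteq> {x. a \<bullet> x = b}"
      using ab(2) closed_hyperplane by (rule closure_minimal)
    then have "a \<bullet> p = b" using assms(2) by blast
    then show ?thesis using ab by (intro exI[of _ a]) auto
  qed
  then obtain a where a: "a \<noteq> 0" "\<And>z. z \<in> S \<Longrightarrow> a \<bullet> p \<le> a \<bullet> z" by blast
  define d where "d = - a / cmod a"
  have Re_d: "Re (cnj d * w) = - (a \<bullet> w) / cmod a" for w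
    unfolding d_def inner_complex_Re by (simp add: Re_divide_of_real)
      (simp add: add_divide_distrib diff_divide_distrib)
  show ?thesis
  proof
    show "cmod d = 1"
      unfolding d_def using a(1) by (simp add: norm_divide)
    show "Re (cnj d * z) \<le> Re (cnj d * p)" if "z \<in> S" for z
      unfolding Re_d using a(2)[OF that] a(1) by (simp add: divide_right_mono)
  qed
qed

lemma frontier_if_on_support_line:
  fixes S :: "complex set"
  assumes "d \<noteq> 0" "\<And>w. w \<in> S \<Longrightarrow> Re (cnj d * w) \<le> m"
    and "z \<in> closure S" "Re (cnj d * z) = m"
  shows "z \<in> frontier S"
proof -
  have "S \<subseteq> {w. d \<bullet> w \<le> m}"
    using assms(2) by (auto simp: inner_complex_Re)
  then have "interior S \<subseteq> {w. d \<bullet> w < m}"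
    using interior_mono interior_halfspace_le[OF assms(1)] by blast
  then show ?thesis
    using assms(3,4) unfolding frontier_def by (auto simp: inner_complex_Re)
qed

lemma chord_through_point:
  fixes d p :: complex
  assumes d: "cmod d = 1" and p: "cmod p < R"
    and m_eq: "m = Re (cnj d * p)" and r_eq: "r = sqrt (R\<^sup>2 - m\<^sup>2)"
  shows "r > 0" "cmod (d * Complex m r) = R" "cmod (d * Complex m (- r)) = R"
    and "p \<in> closed_segment (d * Complex m (- r)) (d * Complex m r)"
    and "\<And>z. z \<in> closed_segment (d * Complex m (- r)) (d * Complex m r) \<Longrightarrow> Re (cnj d * z) = m"
proof -
  define \<mu> where "\<mu> = Im (cnj d * p)"
  have dd: "d * cnj d = 1"
    using d complex_norm_square[of d] by simp
  have "Complex m \<mu> = cnj d * p"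
    unfolding m_eq \<mu>_def by (simp add: complex_eq_iff)
  then have p_eq: "p = d * Complex m \<mu>"
    using dd by (simp add: mult.assoc[symmetric])
  have "cmod (cnj d * p) < R"
    using d p by (simp add: norm_mult)
  note half = inside_disc_chord[OF this, unfolded m_eq[symmetric] \<mu>_def[symmetric], folded r_eq]
  then show "r > 0" by simp
  have "R \<ge> 0"
    using p norm_ge_zero[of p] by linarith
  then have "cmod (Complex m r) = R" "cmod (Complex m (- r)) = R"
    using half by (simp_all add: cmod_def real_sqrt_unique)
  then show "cmod (d * Complex m r) = R" "cmod (d * Complex m (- r)) = R"
    using d by (simp_all only: norm_mult)
  define t where "t = (\<mu> + r) / (2 * r)"
  have "0 \<le> t" "t \<le> 1"
    unfolding t_def using half(1,3) by (auto simp: field_simps)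
  moreover have "(1 - t) *\<^sub>R (d * Complex m (- r)) + t *\<^sub>R (d * Complex m r) = p"
    unfolding p_eq t_def using half by (simp add: scaleR_conv_of_real complex_eq_iff field_simps)
  ultimately show "p \<in> closed_segment (d * Complex m (- r)) (d * Complex m r)"
    unfolding closed_segment_def by (auto intro!: exI[of _ t])
  show "Re (cnj d * z) = m" if z: "z \<in> closed_segment (d * Complex m (- r)) (d * Complex m r)" for z
  proof -
    obtain u where u: "z = (1 - u) *\<^sub>R (d * Complex m (- r)) + u *\<^sub>R (d * Complex m r)"
      using z unfolding closed_segment_def by blast
    have cd: "cnj d * (d * w) = w" for w
      using dd by (simp add: mult.assoc[symmetric] mult.commute[of "cnj d" d])
    have "cnj d * z = (1 - u) *\<^sub>R Complex m (- r) + u *\<^sub>R Complex m r"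
      unfolding u distrib_left mult_scaleR_right cd ..
    then have "Re (cnj d * z) = (1 - u) * m + u * m" by simp
    then show ?thesis by (simp add: algebra_simps)
  qed
qed

context cbounded_operator
begin

lemma chords_if_frontier_inside_disc:
  assumes p: "p \<in> max_num_range A" "p \<in> frontier (num_range A)" "cmod p < R"
  shows "p \<in> chords_A A"
proof -
  have "p \<in> closure (num_range A)" "p \<notin> interior (num_range A)"
    using p(2) unfolding frontier_def by auto
  then obtain d where d: "cmod d = 1"
    and sup: "\<And>z. z \<in> num_range A \<Longrightarrow> Re (cnj d * z) \<le> Re (cnj d * p)"
    using convex_support_line_complex[OF convex_num_range] by blast
  define m r where "m = Re (cnj d * p)" and "r = sqrt (R\<^sup>2 - m\<^sup>2)"
  define a b where "a = d * Complex m (- r)" and "b = d * Complex m r"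
  note chord = chord_through_point[OF d p(3) m_def r_def, folded a_def b_def]
  have "a \<in> closure (num_range A)" "b \<in> closure (num_range A)"
    using support_chord_endpoint_in_closure_rotated[OF d sup p(1) refl p(3), of 1]
      support_chord_endpoint_in_closure_rotated[OF d sup p(1) refl p(3), of "-1"]
    unfolding a_def b_def m_def r_def by simp_all
  moreover have "a \<noteq> b"
    unfolding a_def b_def using d chord(1) by auto
  ultimately have "closed_segment a b \<subseteq> max_num_range A"
    using closed_segment_subset_max_num_range chord(2,3) by simp
  have "closed_segment a b \<subseteq> frontier (num_range A)"
  proof
    fix z assume z: "z \<in> closed_segment a b"
    show "z \<in> frontier (num_range A)"
    proof (rule frontier_if_on_support_line)
      show "d \<noteq> 0" using d by auto
      show "Re (cnj d * w) \<le> m" if "w \<in> num_range A" for w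
        using sup[OF that] unfolding m_def .
      show "z \<in> closure (num_range A)"
        using z \<open>closed_segment a b \<subseteq> max_num_range A\<close> max_num_range_subset_closure by blast
      show "Re (cnj d * z) = m"
        by (rule chord(5)[OF z])
    qed
  qed
  then show ?thesis
    unfolding chords_A_def circ_A_def using \<open>a \<noteq> b\<close> chord(2-4) by blast
qed

lemma chords_subset_max_num_range: "chords_A A \<subseteq> max_num_range A"
proof
  fix p assume "p \<in> chords_A A"
  then obtain a b where ab: "a \<noteq> b" "cmod a = R" "cmod b = R"
      "closed_segment a b \<subseteq> frontier (num_range A)" "p \<in> closed_segment a b"
    unfolding chords_A_def circ_A_def by blast
  have "a \<in> closure (num_range A)" "b \<in> closure (num_range A)"
    using ab(4) ends_in_segment unfolding frontier_def by blast+
  then show "p \<in> max_num_range A"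
    using closed_segment_subset_max_num_range ab by blast
qed

lemma max_num_range_frontier_subset:
  "max_num_range A \<inter> frontier (num_range A) \<subseteq> (op_spectrum A \<inter> circ_A A) \<union> chords_A A"
proof
  fix p assume p: "p \<in> max_num_range A \<inter> frontier (num_range A)"
  then have "p \<in> closure (num_range A)"
    using max_num_range_subset_closure by blast
  show "p \<in> (op_spectrum A \<inter> circ_A A) \<union> chords_A A"
  proof (cases "cmod p = R")
    case True
    then show ?thesis
      using approx_eigenvalue_if_on_circle[OF \<open>p \<in> closure (num_range A)\<close>]
        spectrum_if_approx_eigenvalue unfolding circ_A_def by blast
  next
    case False
    then have "cmod p < R"
      using norm_le_if_in_closure_num_range[OF \<open>p \<in> closure (num_range A)\<close>] by simp
    then show ?thesis
      using chords_if_frontier_inside_disc p by blast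
  qed
qed

end

lemma spectrum_on_circle_subset:
  fixes A :: "'a::chilbert_space \<Rightarrow> 'a"
  assumes "cbounded_linear A"
  shows "op_spectrum A \<inter> circ_A A \<subseteq> max_num_range A \<inter> frontier (num_range A)"
proof
  interpret cbounded_operator A by unfold_locales (rule assms)
  fix l assume "l \<in> op_spectrum A \<inter> circ_A A"
  then have "l \<in> max_num_range A" "cmod l = R"
    using approx_eigenvalue_if_spectrum_on_circle[OF assms] max_num_range_if_approx_eigenvalue
    unfolding circ_A_def by auto
  then show "l \<in> max_num_range A \<inter> frontier (num_range A)"
    using max_num_range_subset_closure frontier_num_range_if_on_circle by blast
qed

theorem corollary3:
  fixes A :: "'a::chilbert_space \<Rightarrow> 'a"
  assumes "\<exists>x::'a. x \<noteq> 0"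
    and "cbounded_linear A"
  shows "max_num_range A \<inter> frontier (num_range A) = (op_spectrum A \<inter> circ_A A) \<union> chords_A A"
proof -
  interpret cbounded_operator A by unfold_locales (rule assms(2))
  have "chords_A A \<subseteq> frontier (num_range A)"
    unfolding chords_A_def by blast
  then show ?thesis
    using spectrum_on_circle_subset[OF assms(2)] chords_subset_max_num_range
      max_num_range_frontier_subset by blast
qed

end
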